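(* Let $(u,x)$ be an enhanced state of an oriented link diagram $D$ with $q(u,x)=j_{\max}(D)-2$. Then $\Phi(u)\le 1$. Moreover, if $\Phi(u)=0$ then $x=x_z^+$ for some $z\in Z(u)$, and if $\Phi(u)=1$ then $x=x_+$.
   Context: $D$ is an oriented link diagram with ordered crossings $c_1,\dots,c_n$, $n_+$ positive and $n_-$ negative. A state is $u\in\{0,1\}^n$, $|u|=\sum u_i$, $\vec1=(1,\dots,1)$; $u\succ_i v$ means $u_i=1,v_i=0$, $u_j=v_j$ otherwise. $D(u)$ is obtained by smoothing each $c_i$ by its Kauffman $u_i$-smoothing; $Z(u)$ is its set of circles; going from $u$ to $v$ with $u\succ_i v$ is surgery along the chord of $c_i$, a merging if that chord joins two different circles. $\Phi(u)$ is the number of mergings in any chain $\vec1=u_0\succ u_1\succ\cdots\succ u_k=u$. An enhancement is a map $x\colon Z(u)\to\{\pm1\}$, $Z_\pm(u,x)$ the circles labelled $\pm1$; $q(u,x)=n_+-2n_-+|u|+|Z_+(u,x)|-|Z_-(u,x)|$; $j_{\max}(D)=\max q(u,x)$. $x_+$ is the constant enhancement $+1$, and for $z\in Z(u)$, $x_z^+$ assigns $-1$ to $z$ and $+1$ to every other circle. *)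

theory Defs
  imports Main
begin

text \<open>
Combinatorial model of an oriented link diagram D with crossings c_0,...,c_(n-1)
(0-based indices).  Each crossing i has four endpoints (i,0),(i,1),(i,2),(i,3),
listed counterclockwise (seen from above): the under-strand runs through (i,0) and
(i,2) and is oriented (i,0) -> (i,2); the over-strand runs through (i,1) and (i,3),
oriented (i,3) -> (i,1) iff the crossing is positive.  The arcs of the diagram
(pieces of strands between crossings) form a fixed-point-free involution on
endpoints.  Crossingless closed components are counted by nfree.  Planarity of the
underlying 4-valent map (rotation (i,k) -> (i,k+1 mod 4)) is imposed by Euler's
formula: faces = vertices + 2 * (number of connected components).
\<close>

record diagram =
  ncr   :: nat
  arc   :: "nat \<times> nat \<Rightarrow> nat \<times> nat"
  pos   :: "nat \<Rightarrow> bool"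
  nfree :: nat

definition endpoints :: "diagram \<Rightarrow> (nat \<times> nat) set" where
  "endpoints D = {0..<ncr D} \<times> {0..<4}"

definition is_out :: "diagram \<Rightarrow> nat \<times> nat \<Rightarrow> bool" where
  "is_out D e \<longleftrightarrow> snd e = 2 \<or> snd e = (if pos D (fst e) then 1 else 3)"

definition rot :: "nat \<times> nat \<Rightarrow> nat \<times> nat" where
  "rot e = (fst e, (snd e + 1) mod 4)"

definition face_perm :: "diagram \<Rightarrow> nat \<times> nat \<Rightarrow> nat \<times> nat" where
  "face_perm D e = rot (arc D e)"

definition num_faces :: "diagram \<Rightarrow> nat" where
  "num_faces D = card (endpoints D // {(e, f). \<exists>m. (face_perm D ^^ m) e = f})"

definition crossing_adj :: "diagram \<Rightarrow> (nat \<times> nat) set" where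
  "crossing_adj D = {(i, j). \<exists>k<4. i < ncr D \<and> fst (arc D (i, k)) = j}"

definition num_components :: "diagram \<Rightarrow> nat" where
  "num_components D =
     card ({0..<ncr D} // ((crossing_adj D \<union> (crossing_adj D)\<inverse>)\<^sup>*))"

definition diagram :: "diagram \<Rightarrow> bool" where
  "diagram D \<longleftrightarrow>
     (\<forall>e \<in> endpoints D. arc D e \<in> endpoints D \<and> arc D e \<noteq> e \<and> arc D (arc D e) = e
                        \<and> (is_out D e \<longleftrightarrow> \<not> is_out D (arc D e)))
     \<and> num_faces D = ncr D + 2 * num_components D"

definition n_plus :: "diagram \<Rightarrow> nat" where
  "n_plus D = card {i. i < ncr D \<and> pos D i}"

definition n_minus :: "diagram \<Rightarrow> nat" where
  "n_minus D = card {i. i < ncr D \<and> \<not> pos D i}"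

text \<open>States: lists u of length n with entries in {0,1}; u ! i is u_(i+1) of the paper.\<close>

definition state :: "diagram \<Rightarrow> nat list \<Rightarrow> bool" where
  "state D u \<longleftrightarrow> length u = ncr D \<and> set u \<subseteq> {0, 1}"

text \<open>Kauffman smoothing: the 0-smoothing (A-smoothing) joins endpoints 0-1 and 2-3,
the 1-smoothing (B-smoothing) joins 1-2 and 3-0.\<close>

definition partner :: "nat \<Rightarrow> nat \<Rightarrow> nat" where
  "partner b k =
     (if b = 0 then (if k = 0 then 1 else if k = 1 then 0 else if k = 2 then 3 else 2)
      else (if k = 1 then 2 else if k = 2 then 1 else if k = 3 then 0 else 3))"

type_synonym point = "(nat \<times> nat) + nat"

definition points :: "diagram \<Rightarrow> point set" where
  "points D = Inl ` endpoints D \<union> Inr ` {0..<nfree D}"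

definition smooth_rel :: "diagram \<Rightarrow> nat list \<Rightarrow> (point \<times> point) set" where
  "smooth_rel D u =
     {(Inl e, Inl (arc D e)) | e. e \<in> endpoints D} \<union>
     {(Inl (i, k), Inl (i, partner (u ! i) k)) | i k. i < ncr D \<and> k < 4}"

text \<open>Z(u): the circles of D(u), each represented as the set of its points.\<close>

definition circles :: "diagram \<Rightarrow> nat list \<Rightarrow> point set set" where
  "circles D u = points D // ((smooth_rel D u \<union> (smooth_rel D u)\<inverse>)\<^sup>*)"

definition circle_of :: "diagram \<Rightarrow> nat list \<Rightarrow> point \<Rightarrow> point set" where
  "circle_of D u p = ((smooth_rel D u \<union> (smooth_rel D u)\<inverse>)\<^sup>*) `` {p}"

text \<open>Surgery at c_i on D(u) with u_i = 1 is a merging iff the chord joins two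
different circles, i.e. the two smoothing arcs at c_i lie on different circles.\<close>

definition merging :: "diagram \<Rightarrow> nat list \<Rightarrow> nat \<Rightarrow> bool" where
  "merging D u i \<longleftrightarrow> circle_of D u (Inl (i, 0)) \<noteq> circle_of D u (Inl (i, 1))"

text \<open>Phi(u), computed along the chain from the all-one state to u which switches the
0-entries of u one at a time in increasing order of index.\<close>

definition chain_state :: "nat list \<Rightarrow> nat \<Rightarrow> nat list" where
  "chain_state u k = map (\<lambda>i. if i < k then u ! i else 1) [0..<length u]"

definition Phi :: "diagram \<Rightarrow> nat list \<Rightarrow> nat" where
  "Phi D u = card {k. k < length u \<and> u ! k = 0 \<and> merging D (chain_state u k) k}"

definition enhancement :: "diagram \<Rightarrow> nat list \<Rightarrow> (point set \<Rightarrow> int) \<Rightarrow> bool" where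
  "enhancement D u x \<longleftrightarrow> (\<forall>z \<in> circles D u. x z = 1 \<or> x z = -1)"

definition qdeg :: "diagram \<Rightarrow> nat list \<Rightarrow> (point set \<Rightarrow> int) \<Rightarrow> int" where
  "qdeg D u x = int (n_plus D) - 2 * int (n_minus D) + int (sum_list u)
      + int (card {z \<in> circles D u. x z = 1}) - int (card {z \<in> circles D u. x z = -1})"

definition jmax :: "diagram \<Rightarrow> int" where
  "jmax D = Max {qdeg D u x | u x. state D u \<and> enhancement D u x}"

end

theory Submission
  imports Defs "HOL-Combinatorics.Transposition"
begin

text \<open>
  Along a chain from the all-one state to u, every surgery changes the number of circles by -1
  if it is a merging and by +1 otherwise. Hence |u| + |Z(u)| + 2 \<Phi>(u) does not depend on u,
  so q(u, x) = j_max - 2 \<Phi>(u) - 2 |Z_-(u, x)|, the maximum being attained at (1, x_+); and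
  q(u, x) = j_max - 2 forces \<Phi>(u) + |Z_-(u, x)| = 1.

  That a surgery never keeps the number of circles is where planarity enters. The crossing
  endpoints are half-edges of a map whose edges are the arcs of D; a partial smoothing is a
  rotation of the half-edges, the circles are the components of a full smoothing, and each
  circle bounds two faces. Splitting vertices never increases 2 C - V - F, which is twice the
  genus minus the number of edges. Starting from the planar diagram, the map with a single
  crossing left unsmoothed therefore has F > 2 C faces, and comparing the faces of its two
  resolutions shows that their numbers of circles differ by exactly one.
\<close>

section \<open>Equivalence closure\<close>

definition eqcl :: "('a \<times> 'a) set \<Rightarrow> ('a \<times> 'a) set" where
  "eqcl R = (R \<union> R\<inverse>)\<^sup>*"

lemma eqcl_refl [simp]: "(x, x) \<in> eqcl R"
  by (simp add: eqcl_def)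

lemma eqcl_base: "(x, y) \<in> R \<Longrightarrow> (x, y) \<in> eqcl R"
  and eqcl_base_converse: "(y, x) \<in> R \<Longrightarrow> (x, y) \<in> eqcl R"
  by (auto simp: eqcl_def)

lemma eqcl_trans: "(x, y) \<in> eqcl R \<Longrightarrow> (y, z) \<in> eqcl R \<Longrightarrow> (x, z) \<in> eqcl R"
  unfolding eqcl_def by (rule rtrancl_trans)

lemma eqcl_sym: "(x, y) \<in> eqcl R \<Longrightarrow> (y, x) \<in> eqcl R"
  unfolding eqcl_def by (meson sym_Un_converse sym_rtrancl symD)

lemma eqcl_induct [consumes 1, case_names base step]:
  assumes "(a, b) \<in> eqcl R" and "P a"
    and "\<And>y z. (a, y) \<in> eqcl R \<Longrightarrow> (y, z) \<in> R \<or> (z, y) \<in> R \<Longrightarrow> P y \<Longrightarrow> P z"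
  shows "P b"
  using assms(1) unfolding eqcl_def
  by (induction rule: rtrancl_induct) (use assms(2,3) in \<open>auto simp: eqcl_def\<close>)

lemma eqcl_Image_eq: "(x, y) \<in> eqcl R \<Longrightarrow> eqcl R `` {x} = eqcl R `` {y}"
  by (auto intro: eqcl_trans eqcl_sym)

lemma eqcl_mono: "R \<subseteq> S \<Longrightarrow> eqcl R \<subseteq> eqcl S"
  unfolding eqcl_def by (rule rtrancl_mono) auto

lemma eqcl_subset: "R \<subseteq> eqcl S \<Longrightarrow> eqcl R \<subseteq> eqcl S"
proof -
  assume "R \<subseteq> eqcl S"
  then have "R \<union> R\<inverse> \<subseteq> (S \<union> S\<inverse>)\<^sup>*" using eqcl_sym unfolding eqcl_def by fast
  then show ?thesis unfolding eqcl_def by (rule rtrancl_subset_rtrancl)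
qed

lemma eqcl_insert_iff:
  "(x, y) \<in> eqcl (insert (a, b) R) \<longleftrightarrow>
     (x, y) \<in> eqcl R \<or> ((x, a) \<in> eqcl R \<and> (b, y) \<in> eqcl R) \<or> ((x, b) \<in> eqcl R \<and> (a, y) \<in> eqcl R)"
proof
  assume "(x, y) \<in> eqcl (insert (a, b) R)"
  then show "(x, y) \<in> eqcl R \<or> ((x, a) \<in> eqcl R \<and> (b, y) \<in> eqcl R) \<or> ((x, b) \<in> eqcl R \<and> (a, y) \<in> eqcl R)"
  proof (induction rule: eqcl_induct)
    case (step y z)
    have "(y, z) \<in> eqcl R \<or> (y, z) = (a, b) \<or> (y, z) = (b, a)"
      using step.hyps(2) by (auto intro: eqcl_base eqcl_base_converse)
    with step.IH show ?case
      by (metis eqcl_trans eqcl_sym eqcl_refl prod.inject)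
  qed simp
next
  have "eqcl R \<subseteq> eqcl (insert (a, b) R)" by (rule eqcl_mono) auto
  moreover have "(a, b) \<in> eqcl (insert (a, b) R)" by (rule eqcl_base) simp
  ultimately show "(x, y) \<in> eqcl R \<or> ((x, a) \<in> eqcl R \<and> (b, y) \<in> eqcl R) \<or> ((x, b) \<in> eqcl R \<and> (a, y) \<in> eqcl R)
      \<Longrightarrow> (x, y) \<in> eqcl (insert (a, b) R)"
    by (meson eqcl_trans eqcl_sym subsetD)
qed

lemma eqcl_insert_absorb: "(a, b) \<in> eqcl R \<Longrightarrow> eqcl (insert (a, b) R) = eqcl R"
proof
  assume "(a, b) \<in> eqcl R"
  then show "eqcl (insert (a, b) R) \<subseteq> eqcl R" by (intro eqcl_subset) (auto intro: eqcl_base)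
  show "eqcl R \<subseteq> eqcl (insert (a, b) R)" by (rule eqcl_mono) auto
qed

lemma quotient_eq_image: "X // r = (\<lambda>x. r `` {x}) ` X"
  by (auto simp: quotient_def)

lemma eqcl_closed:
  assumes "R \<subseteq> X \<times> X" and "x \<in> X" and "(x, y) \<in> eqcl R"
  shows "y \<in> X"
  using assms(3) by (induction rule: eqcl_induct) (use assms(1,2) in auto)

lemma eqcl_insert_Image:
  "eqcl (insert (a, b) R) `` {x} =
    (if (a, x) \<in> eqcl R \<or> (b, x) \<in> eqcl R then eqcl R `` {a} \<union> eqcl R `` {b} else eqcl R `` {x})"
proof (cases "(a, x) \<in> eqcl R \<or> (b, x) \<in> eqcl R")
  case True
  then have "(x, y) \<in> eqcl (insert (a, b) R) \<longleftrightarrow> (a, y) \<in> eqcl R \<or> (b, y) \<in> eqcl R" for y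
    unfolding eqcl_insert_iff by (meson eqcl_trans eqcl_sym)
  then show ?thesis using True by auto
next
  case False
  then have "(x, y) \<in> eqcl (insert (a, b) R) \<longleftrightarrow> (x, y) \<in> eqcl R" for y
    unfolding eqcl_insert_iff by (meson eqcl_sym)
  then show ?thesis using False by auto
qed

lemma card_quotient_eqcl_insert:
  assumes fin: "finite X" and a: "a \<in> X" and b: "b \<in> X"
  shows "card (X // eqcl (insert (a, b) R)) + (if (a, b) \<in> eqcl R then 0 else 1) = card (X // eqcl R)"
proof (cases "(a, b) \<in> eqcl R")
  case True
  then show ?thesis unfolding eqcl_insert_absorb[OF True] by simp
next
  case False
  define A where "A = eqcl R `` {a}"
  define B where "B = eqcl R `` {b}"
  define Rest where "Rest = (\<lambda>x. eqcl R `` {x}) ` (X - (A \<union> B))"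
  have class_A: "x \<in> A \<Longrightarrow> eqcl R `` {x} = A" and class_B: "x \<in> B \<Longrightarrow> eqcl R `` {x} = B" for x
    unfolding A_def B_def by (auto intro: eqcl_trans eqcl_sym)
  have class_ins: "eqcl (insert (a, b) R) `` {x} = (if x \<in> A \<union> B then A \<union> B else eqcl R `` {x})" for x
    using eqcl_insert_Image[of a b R x] unfolding A_def B_def by simp
  have "a \<in> A" "b \<in> B" unfolding A_def B_def by auto
  have old: "X // eqcl R = insert A (insert B Rest)"
    unfolding quotient_eq_image Rest_def using a b class_A class_B \<open>a \<in> A\<close> \<open>b \<in> B\<close>
    by (auto simp: image_iff)
  have new: "X // eqcl (insert (a, b) R) = insert (A \<union> B) Rest"
    unfolding quotient_eq_image Rest_def using a b class_ins \<open>a \<in> A\<close> \<open>b \<in> B\<close>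
    by (auto simp: image_iff)
  have disjoint: "C \<inter> (A \<union> B) = {}" if "C \<in> Rest" for C
  proof -
    obtain x where x: "x \<notin> A \<union> B" "C = eqcl R `` {x}" using \<open>C \<in> Rest\<close> unfolding Rest_def by auto
    have "y \<notin> A \<union> B" if "(x, y) \<in> eqcl R" for y
      using x(1) that unfolding A_def B_def by (auto intro: eqcl_trans eqcl_sym)
    then show ?thesis using x(2) by auto
  qed
  have "A \<noteq> B" using False \<open>b \<in> B\<close> unfolding A_def by auto
  moreover have "A \<notin> Rest" "B \<notin> Rest" "A \<union> B \<notin> Rest"
    using disjoint \<open>a \<in> A\<close> \<open>b \<in> B\<close> by blast+
  moreover have "finite Rest" unfolding Rest_def using fin by simp
  ultimately show ?thesis using old new False by simp
qed

lemma card_quotient_eqcl_eq: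
  assumes img: "f ` X = Y" and RX: "R \<subseteq> X \<times> X" and TY: "T \<subseteq> Y \<times> Y"
    and iff: "\<And>x y. x \<in> X \<Longrightarrow> y \<in> X \<Longrightarrow> (x, y) \<in> eqcl R \<longleftrightarrow> (f x, f y) \<in> eqcl T"
  shows "card (X // eqcl R) = card (Y // eqcl T)"
proof -
  have classes: "f ` (eqcl R `` {x}) = eqcl T `` {f x}" if x: "x \<in> X" for x
  proof
    show "f ` (eqcl R `` {x}) \<subseteq> eqcl T `` {f x}"
      using iff[OF x] eqcl_closed[OF RX x] by auto
    show "eqcl T `` {f x} \<subseteq> f ` (eqcl R `` {x})"
    proof
      fix v assume "v \<in> eqcl T `` {f x}"
      then have v: "(f x, v) \<in> eqcl T" by simp
      then have "v \<in> Y" using eqcl_closed[OF TY] img x by blast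
      then obtain y where "y \<in> X" "v = f y" using img by auto
      then show "v \<in> f ` (eqcl R `` {x})" using iff[OF x] v by auto
    qed
  qed
  have "inj_on ((`) f) (X // eqcl R)"
  proof (rule inj_onI)
    fix C1 C2 assume "C1 \<in> X // eqcl R" "C2 \<in> X // eqcl R" and eq: "f ` C1 = f ` C2"
    then obtain x1 x2 where x: "x1 \<in> X" "C1 = eqcl R `` {x1}" "x2 \<in> X" "C2 = eqcl R `` {x2}"
      by (auto elim!: quotientE)
    then have "(f x1, f x2) \<in> eqcl T" using eq classes by auto
    then show "C1 = C2" using iff x by (simp add: eqcl_Image_eq)
  qed
  moreover have "(`) f ` (X // eqcl R) = Y // eqcl T"
    unfolding quotient_eq_image image_image img[symmetric] using classes by simp
  ultimately show ?thesis using card_image by fastforce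
qed

lemma eqcl_map_prod_cases:
  assumes g: "inj g" and h: "(p, q) \<in> eqcl (map_prod g g ` R)"
  shows "(\<forall>x. p = g x \<longrightarrow> (\<exists>y. q = g y \<and> (x, y) \<in> eqcl R)) \<and> (p \<notin> range g \<longrightarrow> q = p)"
  using h
proof (induction rule: eqcl_induct)
  case (step y z)
  from step.hyps(2) obtain a b where ab: "(a, b) \<in> R \<or> (b, a) \<in> R" "y = g a" "z = g b"
    by auto
  show ?case
  proof (intro conjI allI impI)
    fix x assume "p = g x"
    then obtain y' where "y = g y'" "(x, y') \<in> eqcl R" using step.IH by blast
    then have "(x, b) \<in> eqcl R" using ab g by (auto dest: injD intro: eqcl_trans eqcl_base eqcl_base_converse)
    then show "\<exists>y. z = g y \<and> (x, y) \<in> eqcl R" using ab by blast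
  next
    assume "p \<notin> range g"
    then show "z = p" using step.IH ab by auto
  qed
qed auto

lemma eqcl_map_prod_Image:
  assumes g: "inj g"
  shows "eqcl (map_prod g g ` R) `` {g x} = g ` (eqcl R `` {x})"
proof
  show "eqcl (map_prod g g ` R) `` {g x} \<subseteq> g ` (eqcl R `` {x})"
    using eqcl_map_prod_cases[OF g] by blast
  have "(g x, g y) \<in> eqcl (map_prod g g ` R)" if "(x, y) \<in> eqcl R" for y
    using that
  proof (induction rule: eqcl_induct)
    case (step y z)
    then have "(g y, g z) \<in> eqcl (map_prod g g ` R)" by (force intro: eqcl_base eqcl_base_converse)
    with step.IH show ?case by (rule eqcl_trans)
  qed simp
  then show "g ` (eqcl R `` {x}) \<subseteq> eqcl (map_prod g g ` R) `` {g x}" by auto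
qed

lemma eqcl_map_prod_Image_outside:
  assumes "inj g" and "p \<notin> range g"
  shows "eqcl (map_prod g g ` R) `` {p} = {p}"
  using eqcl_map_prod_cases[OF assms(1)] assms(2) by auto

lemma quotient_eqcl_Image_eq:
  assumes "C \<in> X // eqcl R" and "y \<in> C"
  shows "C = eqcl R `` {y}"
proof -
  obtain x where "C = eqcl R `` {x}" using assms(1) by (blast elim: quotientE)
  with assms(2) show ?thesis using eqcl_Image_eq by simp
qed

lemma card_quotient_eqcl_refine:
  assumes fin: "finite X" and sub: "eqcl S \<subseteq> eqcl R"
    and fibre: "\<And>D. D \<in> X // eqcl R \<Longrightarrow> card {C \<in> X // eqcl S. C \<subseteq> D} = k"
  shows "card (X // eqcl S) = k * card (X // eqcl R)"
proof -
  define fib where "fib D = {C \<in> X // eqcl S. C \<subseteq> D}" for D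
  have union: "X // eqcl S = \<Union> (fib ` (X // eqcl R))"
  proof
    show "X // eqcl S \<subseteq> \<Union> (fib ` (X // eqcl R))"
    proof
      fix C assume C: "C \<in> X // eqcl S"
      then obtain y where y: "y \<in> X" "C = eqcl S `` {y}" by (blast elim: quotientE)
      have "eqcl R `` {y} \<in> X // eqcl R" using y(1) by (rule quotientI)
      moreover have "C \<in> fib (eqcl R `` {y})" unfolding fib_def using C y(2) sub by auto
      ultimately show "C \<in> \<Union> (fib ` (X // eqcl R))" by blast
    qed
    show "\<Union> (fib ` (X // eqcl R)) \<subseteq> X // eqcl S" unfolding fib_def by blast
  qed
  have disjoint: "fib D1 \<inter> fib D2 = {}"
    if D: "D1 \<in> X // eqcl R" "D2 \<in> X // eqcl R" "D1 \<noteq> D2" for D1 D2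
  proof (rule ccontr)
    assume "fib D1 \<inter> fib D2 \<noteq> {}"
    then obtain C where C: "C \<in> X // eqcl S" "C \<subseteq> D1" "C \<subseteq> D2" unfolding fib_def by auto
    then obtain y where "C = eqcl S `` {y}" by (blast elim: quotientE)
    then have "y \<in> D1" "y \<in> D2" using C(2,3) by auto
    then show False using quotient_eqcl_Image_eq[OF D(1)] quotient_eqcl_Image_eq[OF D(2)] D(3) by metis
  qed
  have "finite (X // eqcl S)" "finite (X // eqcl R)" using fin by (simp_all add: quotient_eq_image)
  then have "finite (fib D)" for D unfolding fib_def by simp
  then have "card (X // eqcl S) = (\<Sum>D\<in>X // eqcl R. card (fib D))"
    unfolding union using \<open>finite (X // eqcl R)\<close> disjoint by (intro card_UN_disjoint) auto
  also have "\<dots> = k * card (X // eqcl R)" using fibre unfolding fib_def by simp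
  finally show ?thesis .
qed

section \<open>Cycles of a permutation\<close>

definition graph_on :: "'a set \<Rightarrow> ('a \<Rightarrow> 'a) \<Rightarrow> ('a \<times> 'a) set" where
  "graph_on X f = {(x, f x) | x. x \<in> X}"

definition ncycles :: "'a set \<Rightarrow> ('a \<Rightarrow> 'a) \<Rightarrow> nat" where
  "ncycles X f = card (X // eqcl (graph_on X f))"

definition period :: "('a \<Rightarrow> 'a) \<Rightarrow> 'a \<Rightarrow> nat" where
  "period f x = (LEAST k. 0 < k \<and> (f ^^ k) x = x)"

lemma graph_on_cong: "(\<And>x. x \<in> X \<Longrightarrow> f x = g x) \<Longrightarrow> graph_on X f = graph_on X g"
  unfolding graph_on_def by force

lemma graph_on_eqcl: "x \<in> X \<Longrightarrow> (x, f x) \<in> eqcl (graph_on X f)"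
  unfolding graph_on_def by (blast intro: eqcl_base)

lemma graph_on_eqcl': "x \<in> X \<Longrightarrow> (f x, x) \<in> eqcl (graph_on X f)"
  unfolding graph_on_def by (blast intro: eqcl_base_converse)

lemma graph_on_subset: "(\<And>x. x \<in> X \<Longrightarrow> f x \<in> X) \<Longrightarrow> graph_on X f \<subseteq> X \<times> X"
  unfolding graph_on_def by auto

lemma graph_on_split:
  assumes "a \<in> X" and "b \<in> X"
  shows "graph_on X f = insert (a, f a) (insert (b, f b) (graph_on (X - {a, b}) f))"
  using assms unfolding graph_on_def by auto

locale finite_perm =
  fixes X :: "'a set" and f :: "'a \<Rightarrow> 'a"
  assumes finite_X: "finite X" and bij: "bij_betw f X X"
begin

lemma perm_in: "x \<in> X \<Longrightarrow> f x \<in> X"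
  using bij by (auto simp: bij_betw_def)

lemma perm_inj: "x \<in> X \<Longrightarrow> y \<in> X \<Longrightarrow> f x = f y \<Longrightarrow> x = y"
  using bij by (auto simp: bij_betw_def inj_on_def)

lemma funpow_in: "x \<in> X \<Longrightarrow> (f ^^ m) x \<in> X"
  by (induction m) (auto intro: perm_in)

lemma funpow_inj: "x \<in> X \<Longrightarrow> y \<in> X \<Longrightarrow> (f ^^ m) x = (f ^^ m) y \<Longrightarrow> x = y"
proof (induction m)
  case (Suc m)
  then have "(f ^^ m) x = (f ^^ m) y" using perm_inj[OF funpow_in funpow_in] by simp
  then show ?case using Suc by blast
qed simp

lemma funpow_cancel:
  assumes "x \<in> X" and "i \<le> j" and "(f ^^ i) x = (f ^^ j) x"
  shows "(f ^^ (j - i)) x = x"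
proof -
  have "(f ^^ i) ((f ^^ (j - i)) x) = (f ^^ (i + (j - i))) x" by (simp add: funpow_add)
  also have "\<dots> = (f ^^ i) x" using assms by simp
  finally show ?thesis using funpow_inj funpow_in assms(1) by blast
qed

lemma return_exists:
  assumes x: "x \<in> X"
  shows "\<exists>k>0. (f ^^ k) x = x"
proof -
  let ?g = "\<lambda>m. (f ^^ m) x"
  have "\<not> inj_on ?g {0..card X}"
  proof
    assume "inj_on ?g {0..card X}"
    then have "card (?g ` {0..card X}) = card X + 1" by (simp add: card_image)
    moreover have "?g ` {0..card X} \<subseteq> X" using funpow_in x by auto
    then have "card (?g ` {0..card X}) \<le> card X" using finite_X card_mono by blast
    ultimately show False by simp
  qed
  then obtain i j where "i \<noteq> j" "?g i = ?g j" unfolding inj_on_def by blast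
  then obtain i j where "i < j" "?g i = ?g j" by (metis linorder_neqE_nat)
  then have "(f ^^ (j - i)) x = x" using funpow_cancel[OF x] by simp
  then show ?thesis using \<open>i < j\<close> by (intro exI[of _ "j - i"]) simp
qed

lemma period_pos: "x \<in> X \<Longrightarrow> 0 < period f x"
  and funpow_period: "x \<in> X \<Longrightarrow> (f ^^ period f x) x = x"
  unfolding period_def using LeastI_ex[where P = "\<lambda>k. 0 < k \<and> (f ^^ k) x = x"] return_exists
  by blast+

lemma funpow_neq_below_period: "x \<in> X \<Longrightarrow> 0 < m \<Longrightarrow> m < period f x \<Longrightarrow> (f ^^ m) x \<noteq> x"
  using not_less_Least[of m "\<lambda>k. 0 < k \<and> (f ^^ k) x = x"] unfolding period_def by blast

lemma funpow_distinct_below_period: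
  assumes "x \<in> X" and "i < j" and "j < period f x"
  shows "(f ^^ i) x \<noteq> (f ^^ j) x"
proof
  assume "(f ^^ i) x = (f ^^ j) x"
  then have "(f ^^ (j - i)) x = x" using funpow_cancel assms by simp
  then show False using funpow_neq_below_period[of x "j - i"] assms by simp
qed

lemma eqcl_graph_funpow: "x \<in> X \<Longrightarrow> (x, (f ^^ m) x) \<in> eqcl (graph_on X f)"
proof (induction m)
  case (Suc m)
  have "(x, (f ^^ m) x) \<in> eqcl (graph_on X f)" using Suc by blast
  then have "(x, f ((f ^^ m) x)) \<in> eqcl (graph_on X f)"
    using graph_on_eqcl[OF funpow_in[OF Suc.prems, of m]] by (rule eqcl_trans)
  then show ?case by simp
qed simp

lemma eqcl_graph_imp_funpow:
  assumes "x \<in> X" and "(x, y) \<in> eqcl (graph_on X f)"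
  shows "\<exists>m. (f ^^ m) x = y"
  using assms(2)
proof (induction rule: eqcl_induct)
  case base
  show ?case by (rule exI[of _ 0]) simp
next
  case (step y z)
  then obtain m where m: "(f ^^ m) x = y" by blast
  from step.hyps(2) show ?case
  proof
    assume "(y, z) \<in> graph_on X f"
    then show ?thesis using m by (intro exI[of _ "Suc m"]) (auto simp: graph_on_def)
  next
    assume "(z, y) \<in> graph_on X f"
    then have z: "z \<in> X" "y = f z" by (auto simp: graph_on_def)
    \<comment> \<open>going backwards along one edge is going forwards all around the cycle but one step\<close>
    have "(f ^^ (period f z - 1)) (f z) = (f ^^ (period f z - 1 + 1)) z"
      by (simp only: funpow_add) simp
    also have "\<dots> = z" using period_pos[OF z(1)] funpow_period[OF z(1)] by simp
    finally have "(f ^^ (period f z - 1 + m)) x = z" using m z by (simp add: funpow_add)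
    then show ?thesis by blast
  qed
qed

lemma walk_avoiding:
  assumes x: "x \<in> X" and "p \<le> q"
    and avoid: "\<And>m. p \<le> m \<Longrightarrow> m < q \<Longrightarrow> (f ^^ m) x \<notin> {a, b}"
  shows "((f ^^ p) x, (f ^^ q) x) \<in> eqcl (graph_on (X - {a, b}) f)"
  using \<open>p \<le> q\<close> avoid
proof (induction q)
  case (Suc q)
  show ?case
  proof (cases "p = Suc q")
    case False
    then have "p \<le> q" using Suc.prems by simp
    have "((f ^^ p) x, (f ^^ q) x) \<in> eqcl (graph_on (X - {a, b}) f)"
      using Suc.IH[OF \<open>p \<le> q\<close>] Suc.prems(2) by simp
    moreover have "(f ^^ q) x \<in> X - {a, b}" using funpow_in[OF x] Suc.prems(2)[OF \<open>p \<le> q\<close>] by auto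
    then have "((f ^^ q) x, f ((f ^^ q) x)) \<in> eqcl (graph_on (X - {a, b}) f)"
      by (rule graph_on_eqcl)
    ultimately have "((f ^^ p) x, f ((f ^^ q) x)) \<in> eqcl (graph_on (X - {a, b}) f)"
      by (rule eqcl_trans)
    then show ?thesis by simp
  qed simp
qed simp

lemma cycle_minus_other_point:
  assumes a: "a \<in> X" and "(a, b) \<notin> eqcl (graph_on X f)"
  shows "(f a, a) \<in> eqcl (graph_on (X - {a, b}) f)"
proof -
  have "((f ^^ 1) a, (f ^^ period f a) a) \<in> eqcl (graph_on (X - {a, b}) f)"
  proof (rule walk_avoiding[OF a])
    show "1 \<le> period f a" using period_pos[OF a] by simp
    fix m assume "1 \<le> m" "m < period f a"
    then have "(f ^^ m) a \<noteq> a" using funpow_neq_below_period[OF a] by simp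
    moreover have "(f ^^ m) a \<noteq> b"
    proof
      assume "(f ^^ m) a = b"
      then have "(a, b) \<in> eqcl (graph_on X f)" using eqcl_graph_funpow[OF a, of m] by simp
      with assms(2) show False by contradiction
    qed
    ultimately show "(f ^^ m) a \<notin> {a, b}" by simp
  qed
  then show ?thesis using funpow_period[OF a] by simp
qed

lemma funpow_below_period:
  assumes a: "a \<in> X" and "a \<noteq> b" and "(a, b) \<in> eqcl (graph_on X f)"
  obtains j where "0 < j" "j < period f a" "(f ^^ j) a = b"
proof -
  obtain m where m: "(f ^^ m) a = b" using eqcl_graph_imp_funpow[OF a assms(3)] by blast
  define j where "j = m mod period f a"
  have "(f ^^ j) a = b"
    unfolding j_def using funpow_mod_eq[of "period f a" f a m] funpow_period[OF a] m by simp
  moreover have "j < period f a" unfolding j_def using period_pos[OF a] by simp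
  moreover have "0 < j" using \<open>(f ^^ j) a = b\<close> \<open>a \<noteq> b\<close> by (cases j) auto
  ultimately show ?thesis using that by blast
qed

lemma cycle_arcs:
  assumes a: "a \<in> X" and "a \<noteq> b" and "(a, b) \<in> eqcl (graph_on X f)"
  shows "(f a, b) \<in> eqcl (graph_on (X - {a, b}) f)" and "(f b, a) \<in> eqcl (graph_on (X - {a, b}) f)"
proof -
  obtain j where j: "0 < j" "j < period f a" "(f ^^ j) a = b"
    using funpow_below_period[OF assms] .
  have "((f ^^ 1) a, (f ^^ j) a) \<in> eqcl (graph_on (X - {a, b}) f)"
  proof (rule walk_avoiding[OF a])
    fix k assume "1 \<le> k" "k < j"
    then show "(f ^^ k) a \<notin> {a, b}"
      using funpow_neq_below_period[OF a] funpow_distinct_below_period[OF a, of k j] j by auto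
  qed (use j in simp)
  then show "(f a, b) \<in> eqcl (graph_on (X - {a, b}) f)" using j by simp
  have "((f ^^ Suc j) a, (f ^^ period f a) a) \<in> eqcl (graph_on (X - {a, b}) f)"
  proof (rule walk_avoiding[OF a])
    fix k assume "Suc j \<le> k" "k < period f a"
    then show "(f ^^ k) a \<notin> {a, b}"
      using funpow_neq_below_period[OF a] funpow_distinct_below_period[OF a, of j k] j by auto
  qed (use j in simp)
  then show "(f b, a) \<in> eqcl (graph_on (X - {a, b}) f)" using j funpow_period[OF a] by simp
qed

text \<open>The points (f ^^ k) a with j < k \<le> period f a form the arc from f b back to a,
  where b = (f ^^ j) a.\<close>

lemma cycle_arc_closed:
  assumes a: "a \<in> X" and "j < period f a" and k: "j < k" "k \<le> period f a"
    and edge: "((f ^^ k) a, z) \<in> graph_on (X - {a, (f ^^ j) a}) f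
      \<or> (z, (f ^^ k) a) \<in> graph_on (X - {a, (f ^^ j) a}) f"
  obtains k' where "j < k'" "k' \<le> period f a" "z = (f ^^ k') a"
  using edge
proof
  assume "((f ^^ k) a, z) \<in> graph_on (X - {a, (f ^^ j) a}) f"
  then have "(f ^^ k) a \<noteq> a" "z = f ((f ^^ k) a)" unfolding graph_on_def by auto
  then have "k < period f a" using k funpow_period[OF a] by (cases "k = period f a") auto
  then show thesis using that[of "Suc k"] k \<open>z = f ((f ^^ k) a)\<close> by simp
next
  assume "(z, (f ^^ k) a) \<in> graph_on (X - {a, (f ^^ j) a}) f"
  then have z: "z \<in> X" "z \<noteq> (f ^^ j) a" "f z = (f ^^ k) a" unfolding graph_on_def by auto
  obtain k' where k': "k = Suc k'" using k by (cases k) auto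
  then have "f z = f ((f ^^ k') a)" using z by simp
  then have "z = (f ^^ k') a" using perm_inj[OF z(1) funpow_in[OF a]] by blast
  moreover have "j < k'" using z(2) k k' calculation by (cases "k' = j") auto
  ultimately show thesis using that[of k'] k k' by simp
qed

lemma cycle_arcs_disconnected:
  assumes a: "a \<in> X" and "a \<noteq> b" and "(a, b) \<in> eqcl (graph_on X f)"
  shows "(a, b) \<notin> eqcl (graph_on (X - {a, b}) f)"
proof
  obtain j where j: "0 < j" "j < period f a" "(f ^^ j) a = b"
    using funpow_below_period[OF assms] .
  define A where "A = {(f ^^ k) a | k. j < k \<and> k \<le> period f a}"
  have "a \<in> A" unfolding A_def using j funpow_period[OF a] by (intro CollectI exI[of _ "period f a"]) simp
  have "b \<notin> A"
  proof
    assume "b \<in> A"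
    then obtain k where k: "j < k" "k \<le> period f a" "(f ^^ k) a = b" unfolding A_def by auto
    show False
    proof (cases "k = period f a")
      case True
      then show ?thesis using k j funpow_period[OF a] funpow_neq_below_period[OF a, of j] by simp
    qed (use funpow_distinct_below_period[OF a, of j k] k j in simp)
  qed
  assume "(a, b) \<in> eqcl (graph_on (X - {a, b}) f)"
  then have "b \<in> A"
  proof (induction rule: eqcl_induct)
    case (step y z)
    then obtain k where "j < k" "k \<le> period f a" "y = (f ^^ k) a" unfolding A_def by auto
    with cycle_arc_closed[OF a j(2) this(1,2)] step.hyps(2) j(3) show ?case unfolding A_def by blast
  qed (rule \<open>a \<in> A\<close>)
  with \<open>b \<notin> A\<close> show False by contradiction
qed

lemma ncycles_transpose_split:
  assumes a: "a \<in> X" and b: "b \<in> X" and "a \<noteq> b" and ab: "(a, b) \<in> eqcl (graph_on X f)"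
    and g: "\<And>x. x \<in> X \<Longrightarrow> g x = f (transpose a b x)"
  shows "ncycles X g = ncycles X f + 1"
proof -
  let ?E = "graph_on (X - {a, b}) f"
  have "graph_on (X - {a, b}) g = ?E" by (rule graph_on_cong) (auto simp: g)
  then have graph_g: "graph_on X g = insert (a, f b) (insert (b, f a) ?E)"
    using graph_on_split[OF a b, of g] g[OF a] g[OF b] by simp
  note arcs = cycle_arcs[OF a \<open>a \<noteq> b\<close> ab]
  have "(b, f a) \<in> eqcl ?E" "(a, f b) \<in> eqcl ?E" using eqcl_sym[OF arcs(1)] eqcl_sym[OF arcs(2)] .
  then have eqcl_g: "eqcl (graph_on X g) = eqcl ?E"
    unfolding graph_g by (simp add: eqcl_insert_absorb)
  have "(b, f b) \<notin> eqcl ?E"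
    using cycle_arcs_disconnected[OF a \<open>a \<noteq> b\<close> ab] arcs(2) by (meson eqcl_sym eqcl_trans)
  moreover have "(a, f a) \<in> eqcl (insert (b, f b) ?E)"
    unfolding eqcl_insert_iff using eqcl_sym[OF arcs(1)] eqcl_sym[OF arcs(2)] by blast
  then have "eqcl (graph_on X f) = eqcl (insert (b, f b) ?E)"
    unfolding graph_on_split[OF a b, of f] by (rule eqcl_insert_absorb)
  ultimately show ?thesis
    using card_quotient_eqcl_insert[OF finite_X b perm_in[OF b], of ?E]
    unfolding ncycles_def eqcl_g by simp
qed

lemma ncycles_transpose_join:
  assumes a: "a \<in> X" and b: "b \<in> X" and ab: "(a, b) \<notin> eqcl (graph_on X f)"
    and g: "\<And>x. x \<in> X \<Longrightarrow> g x = f (transpose a b x)"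
  shows "ncycles X g + 1 = ncycles X f" and "(a, b) \<in> eqcl (graph_on X g)"
proof -
  let ?E = "graph_on (X - {a, b}) f"
  have "a \<noteq> b" using ab by auto
  have "graph_on (X - {a, b}) g = ?E" by (rule graph_on_cong) (auto simp: g)
  then have graph_g: "graph_on X g = insert (a, f b) (insert (b, f a) ?E)"
    using graph_on_split[OF a b, of g] g[OF a] g[OF b] \<open>a \<noteq> b\<close> by simp
  have "(b, a) \<notin> eqcl (graph_on X f)" using ab eqcl_sym by metis
  then have fa: "(f a, a) \<in> eqcl ?E" and fb: "(f b, b) \<in> eqcl ?E"
    using cycle_minus_other_point[OF a ab] cycle_minus_other_point[OF b] by (auto simp: insert_commute)
  have "(b, f b) \<in> eqcl ?E" "(a, f a) \<in> eqcl ?E" using eqcl_sym[OF fb] eqcl_sym[OF fa] .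
  then have eqcl_f: "eqcl (graph_on X f) = eqcl ?E"
    unfolding graph_on_split[OF a b, of f] by (simp add: eqcl_insert_absorb)
  have "(b, f a) \<notin> eqcl ?E"
    using ab fa unfolding eqcl_f by (meson eqcl_sym eqcl_trans)
  moreover have "(a, f b) \<in> eqcl (insert (b, f a) ?E)"
    unfolding eqcl_insert_iff using eqcl_sym[OF fa] eqcl_sym[OF fb] by blast
  then have eqcl_g: "eqcl (graph_on X g) = eqcl (insert (b, f a) ?E)"
    unfolding graph_g by (rule eqcl_insert_absorb)
  ultimately show "ncycles X g + 1 = ncycles X f"
    using card_quotient_eqcl_insert[OF finite_X b perm_in[OF a], of ?E]
    unfolding ncycles_def eqcl_g eqcl_f by simp
  show "(a, b) \<in> eqcl (graph_on X g)"
    unfolding eqcl_g eqcl_insert_iff by (intro disjI2 conjI eqcl_sym[OF fa] eqcl_refl)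
qed

end

lemma eqcl_graph_transpose_subset:
  assumes "a \<in> X" and "b \<in> X" and g: "\<And>x. x \<in> X \<Longrightarrow> g x = f (transpose a b x)"
  shows "eqcl (graph_on X g) \<subseteq> eqcl (insert (a, b) (graph_on X f))"
proof (rule eqcl_subset)
  let ?C = "eqcl (insert (a, b) (graph_on X f))"
  have f_edge: "(x, f x) \<in> ?C" if "x \<in> X" for x
    using graph_on_eqcl[OF that] eqcl_mono[of "graph_on X f" "insert (a, b) (graph_on X f)"] by blast
  have ab: "(a, b) \<in> ?C" by (rule eqcl_base) simp
  show "graph_on X g \<subseteq> ?C"
  proof
    fix p assume "p \<in> graph_on X g"
    then obtain x where x: "x \<in> X" "p = (x, g x)" unfolding graph_on_def by auto
    consider "x = a" | "x = b" | "x \<noteq> a" "x \<noteq> b" by blast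
    then show "p \<in> ?C"
    proof cases
      case 1
      then show ?thesis using eqcl_trans[OF ab f_edge[OF \<open>b \<in> X\<close>]] x g[OF x(1)] by simp
    next
      case 2
      then show ?thesis using eqcl_trans[OF eqcl_sym[OF ab] f_edge[OF \<open>a \<in> X\<close>]] x g[OF x(1)] by simp
    next
      case 3
      then show ?thesis using f_edge[OF x(1)] x g[OF x(1)] by simp
    qed
  qed
qed

lemma eqcl_graph_transpose_away:
  assumes a: "a \<in> X" and b: "b \<in> X" and g: "\<And>x. x \<in> X \<Longrightarrow> g x = f (transpose a b x)"
    and xy: "(x, y) \<in> eqcl (graph_on X f)"
    and xa: "(x, a) \<notin> eqcl (graph_on X f)" and xb: "(x, b) \<notin> eqcl (graph_on X f)"
  shows "(x, y) \<in> eqcl (graph_on X g)"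
proof -
  let ?E = "graph_on (X - {a, b}) f"
  let ?Eb = "insert (b, f b) ?E"
  have Eb_sub: "eqcl ?Eb \<subseteq> eqcl (graph_on X f)"
    unfolding graph_on_split[OF a b, of f] by (rule eqcl_mono) auto
  have E_sub: "eqcl ?E \<subseteq> eqcl ?Eb" by (rule eqcl_mono) auto
  have "(x, f a) \<notin> eqcl (graph_on X f)" "(x, f b) \<notin> eqcl (graph_on X f)"
    using xa xb eqcl_trans[OF _ graph_on_eqcl'[OF a]] eqcl_trans[OF _ graph_on_eqcl'[OF b]] by blast+
  then have not_via: "(x, a) \<notin> eqcl ?Eb" "(x, f a) \<notin> eqcl ?Eb" "(x, b) \<notin> eqcl ?E" "(x, f b) \<notin> eqcl ?E"
    using xa xb Eb_sub E_sub by blast+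
  have "(x, y) \<in> eqcl (insert (a, f a) ?Eb)"
    using xy unfolding graph_on_split[OF a b, of f] .
  then have "(x, y) \<in> eqcl ?Eb" using not_via(1,2) unfolding eqcl_insert_iff by blast
  then have "(x, y) \<in> eqcl ?E" using not_via(3,4) unfolding eqcl_insert_iff by blast
  moreover have "?E \<subseteq> graph_on X g" unfolding graph_on_def using g by auto
  ultimately show ?thesis using eqcl_mono by blast
qed

section \<open>Maps given by a vertex rotation and an edge involution\<close>

lemma bij_betw_involution:
  assumes "\<And>x. x \<in> X \<Longrightarrow> g x \<in> X" and "\<And>x. x \<in> X \<Longrightarrow> g (g x) = x"
  shows "bij_betw g X X"
  by (rule bij_betw_byWitness[where f' = g]) (use assms in auto)

text \<open>X is a finite set of half-edges paired into edges by \<alpha>; a bijection s of X is the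
  rotation around the vertices. The cycles of s are the vertices, those of s \<circ> \<alpha> the faces.\<close>

locale fpf_involution =
  fixes X :: "'a set" and \<alpha> :: "'a \<Rightarrow> 'a"
  assumes finite_X: "finite X" and \<alpha>_in: "\<And>x. x \<in> X \<Longrightarrow> \<alpha> x \<in> X"
    and \<alpha>_\<alpha>: "\<And>x. x \<in> X \<Longrightarrow> \<alpha> (\<alpha> x) = x" and \<alpha>_neq: "\<And>x. x \<in> X \<Longrightarrow> \<alpha> x \<noteq> x"
begin

definition map_rel :: "('a \<Rightarrow> 'a) \<Rightarrow> ('a \<times> 'a) set" where
  "map_rel s = graph_on X s \<union> graph_on X \<alpha>"

definition ncomp :: "('a \<Rightarrow> 'a) \<Rightarrow> nat" where
  "ncomp s = card (X // eqcl (map_rel s))"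

definition nfaces :: "('a \<Rightarrow> 'a) \<Rightarrow> nat" where
  "nfaces s = ncycles X (s \<circ> \<alpha>)"

text \<open>By Euler's formula V - E + F = 2 C - 2 g, this is twice the genus minus the number of edges.\<close>

definition excess :: "('a \<Rightarrow> 'a) \<Rightarrow> int" where
  "excess s = 2 * int (ncomp s) - int (ncycles X s) - int (nfaces s)"

lemma bij_\<alpha>: "bij_betw \<alpha> X X"
  by (rule bij_betw_involution) (use \<alpha>_in \<alpha>_\<alpha> in auto)

lemma finite_perm_face: "bij_betw s X X \<Longrightarrow> finite_perm X (s \<circ> \<alpha>)"
  by unfold_locales (use finite_X bij_betw_trans[OF bij_\<alpha>] in auto)

lemma \<alpha>_eqcl: "x \<in> X \<Longrightarrow> (x, \<alpha> x) \<in> eqcl (map_rel s)"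
  unfolding map_rel_def graph_on_def by (blast intro: eqcl_base)

lemma rotation_eqcl: "x \<in> X \<Longrightarrow> (x, s x) \<in> eqcl (map_rel s)"
  unfolding map_rel_def graph_on_def by (blast intro: eqcl_base)

lemma eqcl_faces_subset: "eqcl (graph_on X (s \<circ> \<alpha>)) \<subseteq> eqcl (map_rel s)"
proof (rule eqcl_subset)
  have "(x, s (\<alpha> x)) \<in> eqcl (map_rel s)" if "x \<in> X" for x
    using eqcl_trans[OF \<alpha>_eqcl[OF that] rotation_eqcl[OF \<alpha>_in[OF that]]] .
  then show "graph_on X (s \<circ> \<alpha>) \<subseteq> eqcl (map_rel s)"
    unfolding graph_on_def by auto
qed

lemma face_transpose:
  assumes a: "a \<in> X" and b: "b \<in> X" and s': "\<And>x. x \<in> X \<Longrightarrow> s' x = s (transpose a b x)"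
    and x: "x \<in> X"
  shows "(s' \<circ> \<alpha>) x = (s \<circ> \<alpha>) (transpose (\<alpha> a) (\<alpha> b) x)"
proof -
  have "transpose a b (\<alpha> x) = \<alpha> (transpose (\<alpha> a) (\<alpha> b) x)"
    using \<alpha>_\<alpha>[OF a] \<alpha>_\<alpha>[OF b] \<alpha>_\<alpha>[OF x] by (auto simp: transpose_def)
  then show ?thesis using s'[OF \<alpha>_in[OF x]] by simp
qed

text \<open>Composing the rotation with the transposition of two half-edges at the same vertex
  splits that vertex in two.\<close>

context
  fixes s s' :: "'a \<Rightarrow> 'a" and a b :: 'a
  assumes s: "bij_betw s X X" and a: "a \<in> X" and b: "b \<in> X" and "a \<noteq> b"
    and ab: "(a, b) \<in> eqcl (graph_on X s)"
    and s': "\<And>x. x \<in> X \<Longrightarrow> s' x = s (transpose a b x)"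
begin

interpretation rotation: finite_perm X s
  by unfold_locales (rule finite_X, rule s)

lemma ncycles_split_vertex: "ncycles X s' = ncycles X s + 1"
  by (rule rotation.ncycles_transpose_split[OF a b \<open>a \<noteq> b\<close> ab s'])

lemma ncomp_split_vertex:
  shows "ncomp s' \<le> ncomp s + 1" and "(a, b) \<in> eqcl (map_rel s') \<Longrightarrow> ncomp s' = ncomp s"
proof -
  let ?Q = "graph_on (X - {a, b}) s \<union> graph_on X \<alpha>"
  note arcs = rotation.cycle_arcs[OF a \<open>a \<noteq> b\<close> ab]
  have bsa: "(b, s a) \<in> eqcl ?Q" and asb: "(a, s b) \<in> eqcl ?Q"
    using eqcl_mono[of "graph_on (X - {a, b}) s" ?Q] eqcl_sym[OF arcs(1)] eqcl_sym[OF arcs(2)] by auto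
  have "graph_on (X - {a, b}) s' = graph_on (X - {a, b}) s" by (rule graph_on_cong) (auto simp: s')
  then have "map_rel s' = insert (a, s b) (insert (b, s a) ?Q)"
    unfolding map_rel_def using graph_on_split[OF a b, of s'] s'[OF a] s'[OF b] \<open>a \<noteq> b\<close> by auto
  then have new: "eqcl (map_rel s') = eqcl ?Q"
    using bsa asb by (simp add: eqcl_insert_absorb)
  have "map_rel s = insert (a, s a) (insert (b, s b) ?Q)"
    unfolding map_rel_def using graph_on_split[OF a b, of s] by auto
  moreover have "(a, s a) \<in> eqcl (insert (b, s b) ?Q)"
    unfolding eqcl_insert_iff using bsa asb by blast
  ultimately have old: "eqcl (map_rel s) = eqcl (insert (b, s b) ?Q)"
    by (simp add: eqcl_insert_absorb)
  have count: "ncomp s + (if (b, s b) \<in> eqcl ?Q then 0 else 1) = ncomp s'"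
    unfolding ncomp_def old new by (rule card_quotient_eqcl_insert[OF finite_X b rotation.perm_in[OF b]])
  then show "ncomp s' \<le> ncomp s + 1" by (auto split: if_splits)
  assume "(a, b) \<in> eqcl (map_rel s')"
  then have "(b, s b) \<in> eqcl ?Q" using asb unfolding new by (meson eqcl_sym eqcl_trans)
  then show "ncomp s' = ncomp s" using count by simp
qed

lemma nfaces_split_vertex:
  "nfaces s' = nfaces s + 1 \<or> (nfaces s' + 1 = nfaces s \<and> ncomp s' = ncomp s)"
proof -
  interpret face: finite_perm X "s \<circ> \<alpha>" by (rule finite_perm_face[OF s])
  have faces: "(s' \<circ> \<alpha>) x = (s \<circ> \<alpha>) (transpose (\<alpha> a) (\<alpha> b) x)" if "x \<in> X" for x
    by (rule face_transpose[where s = s and s' = s', OF a b s' that])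
  show ?thesis
  proof (cases "(\<alpha> a, \<alpha> b) \<in> eqcl (graph_on X (s \<circ> \<alpha>))")
    case True
    have "\<alpha> a \<noteq> \<alpha> b" using \<alpha>_\<alpha>[OF a] \<alpha>_\<alpha>[OF b] \<open>a \<noteq> b\<close> by metis
    then show ?thesis
      using face.ncycles_transpose_split[where g = "s' \<circ> \<alpha>", OF \<alpha>_in[OF a] \<alpha>_in[OF b] _ True faces]
      unfolding nfaces_def by simp
  next
    case False
    note join = face.ncycles_transpose_join[where g = "s' \<circ> \<alpha>", OF \<alpha>_in[OF a] \<alpha>_in[OF b] False faces]
    then have "(\<alpha> a, \<alpha> b) \<in> eqcl (map_rel s')" using eqcl_faces_subset by blast
    then have "(a, b) \<in> eqcl (map_rel s')"
      using \<alpha>_eqcl[OF a, of s'] eqcl_sym[OF \<alpha>_eqcl[OF b, of s']] by (blast intro: eqcl_trans)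
    then show ?thesis using join(1) ncomp_split_vertex(2) unfolding nfaces_def by simp
  qed
qed

lemma excess_split_vertex_le: "excess s' \<le> excess s"
  using ncycles_split_vertex ncomp_split_vertex nfaces_split_vertex unfolding excess_def by linarith

end

end

section \<open>Smoothings: maps all of whose vertices have degree two\<close>

locale smoothing = fpf_involution +
  fixes \<sigma> :: "'a \<Rightarrow> 'a"
  assumes \<sigma>_in: "\<And>x. x \<in> X \<Longrightarrow> \<sigma> x \<in> X"
    and \<sigma>_\<sigma>: "\<And>x. x \<in> X \<Longrightarrow> \<sigma> (\<sigma> x) = x" and \<sigma>_neq: "\<And>x. x \<in> X \<Longrightarrow> \<sigma> x \<noteq> x"
begin

definition \<phi> :: "'a \<Rightarrow> 'a" where "\<phi> = \<sigma> \<circ> \<alpha>"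
definition \<psi> :: "'a \<Rightarrow> 'a" where "\<psi> = \<alpha> \<circ> \<sigma>"

lemma \<phi>_apply: "\<phi> x = \<sigma> (\<alpha> x)" and \<psi>_apply: "\<psi> x = \<alpha> (\<sigma> x)"
  by (simp_all add: \<phi>_def \<psi>_def)

lemma bij_\<sigma>: "bij_betw \<sigma> X X"
  by (rule bij_betw_involution) (use \<sigma>_in \<sigma>_\<sigma> in auto)

sublocale face: finite_perm X \<phi>
  unfolding \<phi>_def by (rule finite_perm_face[OF bij_\<sigma>])

lemma funpow_\<psi>_\<phi>: "x \<in> X \<Longrightarrow> (\<psi> ^^ r) ((\<phi> ^^ r) x) = x"
proof (induction r arbitrary: x)
  case (Suc r)
  define y where "y = (\<phi> ^^ r) x"
  have y: "y \<in> X" unfolding y_def by (rule face.funpow_in[OF Suc.prems])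
  have "(\<psi> ^^ Suc r) ((\<phi> ^^ Suc r) x) = (\<psi> ^^ r) (\<psi> ((\<phi> ^^ Suc r) x))"
    by (simp only: funpow_Suc_right o_apply)
  also have "\<psi> ((\<phi> ^^ Suc r) x) = \<psi> (\<phi> y)" unfolding y_def by simp
  also have "\<dots> = y" using \<sigma>_\<sigma>[OF \<alpha>_in[OF y]] \<alpha>_\<alpha>[OF y] by (simp add: \<phi>_apply \<psi>_apply)
  finally show ?case using Suc.IH[OF Suc.prems] unfolding y_def by simp
qed simp

lemma \<sigma>_funpow_\<phi>: "x \<in> X \<Longrightarrow> \<sigma> ((\<phi> ^^ r) x) = (\<psi> ^^ r) (\<sigma> x)"
proof (induction r)
  case (Suc r)
  define y where "y = (\<phi> ^^ r) x"
  have yX: "y \<in> X" unfolding y_def by (rule face.funpow_in[OF Suc.prems])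
  have "\<sigma> ((\<phi> ^^ Suc r) x) = \<sigma> (\<phi> y)" unfolding y_def by simp
  also have "\<dots> = \<alpha> y" using \<sigma>_\<sigma>[OF \<alpha>_in[OF yX]] by (simp add: \<phi>_apply)
  also have "\<dots> = \<psi> (\<sigma> y)" using \<sigma>_\<sigma>[OF yX] by (simp add: \<psi>_apply)
  also have "\<dots> = \<psi> ((\<psi> ^^ r) (\<sigma> x))" using Suc.IH[OF Suc.prems] unfolding y_def by simp
  also have "\<dots> = (\<psi> ^^ Suc r) (\<sigma> x)" by simp
  finally show ?case .
qed simp

text \<open>If the face walk from x reached \<sigma> x, then by the two lemmas above its midpoint would be
  fixed by \<sigma> (walk of even length) or by \<alpha> (odd length).\<close>

lemma smoothing_arc_not_on_face:
  assumes x: "x \<in> X"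
  shows "(x, \<sigma> x) \<notin> eqcl (graph_on X \<phi>)"
proof
  assume "(x, \<sigma> x) \<in> eqcl (graph_on X \<phi>)"
  then obtain m where m: "(\<phi> ^^ m) x = \<sigma> x" using face.eqcl_graph_imp_funpow[OF x] by blast
  define r where "r = m div 2"
  define y where "y = (\<phi> ^^ r) x"
  have yX: "y \<in> X" unfolding y_def by (rule face.funpow_in[OF x])
  show False
  proof (cases "even m")
    case True
    then have mr: "m = r + r" unfolding r_def by presburger
    have "(\<phi> ^^ m) x = (\<phi> ^^ r) y" unfolding mr y_def by (simp only: funpow_add o_apply)
    then have "\<sigma> x = (\<phi> ^^ r) y" using m by simp
    then have "(\<psi> ^^ r) (\<sigma> x) = y" using funpow_\<psi>_\<phi>[OF yX] by simp
    then have "\<sigma> y = y" using \<sigma>_funpow_\<phi>[OF x] unfolding y_def by simp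
    then show False using \<sigma>_neq[OF yX] by simp
  next
    case False
    then have mr: "m = r + Suc r" unfolding r_def by presburger
    have "(\<phi> ^^ m) x = (\<phi> ^^ r) ((\<phi> ^^ Suc r) x)" unfolding mr by (simp only: funpow_add o_apply)
    also have "(\<phi> ^^ Suc r) x = \<phi> y" unfolding y_def by simp
    finally have "\<sigma> x = (\<phi> ^^ r) (\<phi> y)" using m by simp
    then have "(\<psi> ^^ r) (\<sigma> x) = \<phi> y" using funpow_\<psi>_\<phi>[OF face.perm_in[OF yX]] by simp
    then have "\<sigma> y = \<sigma> (\<alpha> y)" using \<sigma>_funpow_\<phi>[OF x] unfolding y_def by (simp add: \<phi>_apply)
    then have "\<sigma> (\<sigma> y) = \<sigma> (\<sigma> (\<alpha> y))" by simp
    then have "y = \<alpha> y" using \<sigma>_\<sigma>[OF yX] \<sigma>_\<sigma>[OF \<alpha>_in[OF yX]] by simp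
    then show False using \<alpha>_neq[OF yX] by simp
  qed
qed

lemma eqcl_face_image:
  "(x, y) \<in> eqcl (graph_on X \<phi>) \<Longrightarrow> (\<sigma> x, \<sigma> y) \<in> eqcl (graph_on X \<phi>)"
proof (induction rule: eqcl_induct)
  case (step y z)
  have reverse: "(\<sigma> (\<phi> w), \<sigma> w) \<in> graph_on X \<phi>" if "w \<in> X" for w
  proof -
    have "\<phi> (\<sigma> (\<phi> w)) = \<sigma> w" using \<sigma>_\<sigma>[OF \<alpha>_in[OF that]] \<alpha>_\<alpha>[OF that] by (simp add: \<phi>_apply)
    then show ?thesis using \<sigma>_in[OF face.perm_in[OF that]] unfolding graph_on_def by force
  qed
  from step.hyps(2) have "(\<sigma> y, \<sigma> z) \<in> eqcl (graph_on X \<phi>)"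
  proof
    assume "(y, z) \<in> graph_on X \<phi>"
    then show ?thesis using eqcl_base_converse[OF reverse[of y]] unfolding graph_on_def by auto
  next
    assume "(z, y) \<in> graph_on X \<phi>"
    then show ?thesis using eqcl_base[OF reverse[of z]] unfolding graph_on_def by auto
  qed
  with step.IH show ?case by (rule eqcl_trans)
qed simp

lemma eqcl_map_rel_face_cases:
  assumes x: "x \<in> X" and "(x, y) \<in> eqcl (map_rel \<sigma>)"
  shows "(x, y) \<in> eqcl (graph_on X \<phi>) \<or> (\<sigma> x, y) \<in> eqcl (graph_on X \<phi>)"
  using assms(2)
proof (induction rule: eqcl_induct)
  case (step y z)
  let ?C = "eqcl (graph_on X \<phi>)"
  have y: "y \<in> X" using step.hyps(2) \<sigma>_in \<alpha>_in unfolding map_rel_def graph_on_def by auto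
  have "z = \<sigma> y \<or> z = \<alpha> y"
    using step.hyps(2) \<sigma>_\<sigma> \<alpha>_\<alpha> unfolding map_rel_def graph_on_def by auto
  moreover have "(x, \<sigma> y) \<in> ?C \<or> (\<sigma> x, \<sigma> y) \<in> ?C"
    using step.IH eqcl_face_image[of x y] eqcl_face_image[of "\<sigma> x" y] \<sigma>_\<sigma>[OF x] by auto
  moreover have "(x, \<alpha> y) \<in> ?C \<or> (\<sigma> x, \<alpha> y) \<in> ?C"
  proof -
    have "\<alpha> y = \<sigma> (\<phi> y)" using \<sigma>_\<sigma>[OF \<alpha>_in[OF y]] by (simp add: \<phi>_apply)
    moreover have "(x, \<phi> y) \<in> ?C \<or> (\<sigma> x, \<phi> y) \<in> ?C"
      using step.IH eqcl_trans[OF _ graph_on_eqcl[OF y]] by blast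
    ultimately show ?thesis
      using eqcl_face_image[of x "\<phi> y"] eqcl_face_image[of "\<sigma> x" "\<phi> y"] \<sigma>_\<sigma>[OF x] by auto
  qed
  ultimately show ?case by blast
qed simp

lemma faces_in_component:
  assumes x: "x \<in> X"
  shows "{C \<in> X // eqcl (graph_on X \<phi>). C \<subseteq> eqcl (map_rel \<sigma>) `` {x}}
    = {eqcl (graph_on X \<phi>) `` {x}, eqcl (graph_on X \<phi>) `` {\<sigma> x}}"
    (is "{C \<in> X // ?C. C \<subseteq> ?R `` {x}} = _")
proof -
  have sub: "?C \<subseteq> ?R" unfolding \<phi>_def by (rule eqcl_faces_subset)
  have "C = ?C `` {x} \<or> C = ?C `` {\<sigma> x}" if C: "C \<in> X // ?C" "C \<subseteq> ?R `` {x}" for C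
  proof -
    obtain y where y: "y \<in> X" "C = ?C `` {y}" using C(1) by (blast elim: quotientE)
    then have "(x, y) \<in> ?R" using C(2) by auto
    then show ?thesis using eqcl_map_rel_face_cases[OF x] eqcl_Image_eq y(2) by metis
  qed
  moreover have "?R `` {\<sigma> x} = ?R `` {x}"
    using eqcl_Image_eq[OF eqcl_sym[OF rotation_eqcl[OF x]]] .
  then have "?C `` {x} \<subseteq> ?R `` {x}" "?C `` {\<sigma> x} \<subseteq> ?R `` {x}" using sub by auto
  ultimately show ?thesis using x \<sigma>_in[OF x] by (auto intro: quotientI)
qed

theorem nfaces_eq_twice_ncomp: "nfaces \<sigma> = 2 * ncomp \<sigma>"
  unfolding nfaces_def ncomp_def ncycles_def \<phi>_def[symmetric]
proof (rule card_quotient_eqcl_refine[OF finite_X])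
  show "eqcl (graph_on X \<phi>) \<subseteq> eqcl (map_rel \<sigma>)" unfolding \<phi>_def by (rule eqcl_faces_subset)
  fix D assume "D \<in> X // eqcl (map_rel \<sigma>)"
  then obtain x where x: "x \<in> X" "D = eqcl (map_rel \<sigma>) `` {x}" by (blast elim: quotientE)
  have "\<sigma> x \<notin> eqcl (graph_on X \<phi>) `` {x}" using smoothing_arc_not_on_face[OF x(1)] by simp
  moreover have "\<sigma> x \<in> eqcl (graph_on X \<phi>) `` {\<sigma> x}" by simp
  ultimately have "eqcl (graph_on X \<phi>) `` {x} \<noteq> eqcl (graph_on X \<phi>) `` {\<sigma> x}" by blast
  then show "card {C \<in> X // eqcl (graph_on X \<phi>). C \<subseteq> D} = 2"
    unfolding x(2) faces_in_component[OF x(1)] by simp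
qed

end

section \<open>Resolving a four-valent vertex of a planar map\<close>

text \<open>The hypothesis on K is what planarity gives: by Euler's formula, a genus zero
  map with one vertex of degree four and all others of degree two has 2 C + 1 faces.\<close>

locale vertex_resolution = fpf_involution +
  fixes K s t :: "'a \<Rightarrow> 'a" and a0 a1 a2 a3 :: 'a
  assumes bij_K: "bij_betw K X X"
    and in_X: "a0 \<in> X" "a1 \<in> X" "a2 \<in> X" "a3 \<in> X" and distinct: "distinct [a0, a1, a2, a3]"
    and K_cycle: "K a0 = a1" "K a1 = a2" "K a2 = a3" "K a3 = a0"
    and s: "\<And>x. x \<in> X \<Longrightarrow> s x = K (transpose a0 a2 x)"
    and t: "\<And>x. x \<in> X \<Longrightarrow> t x = K (transpose a1 a3 x)"
    and smoothing_s: "smoothing X \<alpha> s" and smoothing_t: "smoothing X \<alpha> t"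
    and planar: "2 * ncomp K < nfaces K"
begin

interpretation S: smoothing X \<alpha> s by (rule smoothing_s)
interpretation T: smoothing X \<alpha> t by (rule smoothing_t)
interpretation face_s: finite_perm X "s \<circ> \<alpha>" by (rule finite_perm_face[OF S.bij_\<sigma>])
interpretation face_K: finite_perm X "K \<circ> \<alpha>" by (rule finite_perm_face[OF bij_K])

lemma s_at: "s a0 = a3" "s a1 = a2" "s a2 = a1" "s a3 = a0"
  using s in_X K_cycle distinct by auto

lemma K_via_s: "x \<in> X \<Longrightarrow> K x = s (transpose a0 a2 x)"
  using s[of "transpose a0 a2 x"] in_X by (auto simp: transpose_def)

lemma face_K: "x \<in> X \<Longrightarrow> (K \<circ> \<alpha>) x = (s \<circ> \<alpha>) (transpose (\<alpha> a0) (\<alpha> a2) x)"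
  by (rule face_transpose[where s = s and s' = K, OF in_X(1,3) K_via_s])

lemma face_t: "x \<in> X \<Longrightarrow> (t \<circ> \<alpha>) x = (K \<circ> \<alpha>) (transpose (\<alpha> a1) (\<alpha> a3) x)"
  by (rule face_transpose[where s = K and s' = t, OF in_X(2,4) t])

lemma \<alpha>_distinct: "\<alpha> a0 \<noteq> \<alpha> a2" "\<alpha> a1 \<noteq> \<alpha> a3"
  using \<alpha>_\<alpha> in_X distinct by (metis distinct_length_2_or_more)+

lemma nfaces_s: "nfaces s = 2 * ncomp s" and nfaces_t: "nfaces t = 2 * ncomp t"
  using S.nfaces_eq_twice_ncomp T.nfaces_eq_twice_ncomp by (simp_all add: S.\<phi>_def T.\<phi>_def nfaces_def)

lemma faces_s_at:
  "(\<alpha> a0, a3) \<in> eqcl (graph_on X (s \<circ> \<alpha>))" "(\<alpha> a3, a0) \<in> eqcl (graph_on X (s \<circ> \<alpha>))"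
  "(\<alpha> a1, a2) \<in> eqcl (graph_on X (s \<circ> \<alpha>))" "(\<alpha> a2, a1) \<in> eqcl (graph_on X (s \<circ> \<alpha>))"
proof -
  have "(\<alpha> x, s x) \<in> eqcl (graph_on X (s \<circ> \<alpha>))" if "x \<in> X" for x
    using graph_on_eqcl[OF \<alpha>_in[OF that], of "s \<circ> \<alpha>"] \<alpha>_\<alpha>[OF that] by simp
  then show "(\<alpha> a0, a3) \<in> eqcl (graph_on X (s \<circ> \<alpha>))" "(\<alpha> a3, a0) \<in> eqcl (graph_on X (s \<circ> \<alpha>))"
    "(\<alpha> a1, a2) \<in> eqcl (graph_on X (s \<circ> \<alpha>))" "(\<alpha> a2, a1) \<in> eqcl (graph_on X (s \<circ> \<alpha>))"
    using in_X s_at by metis+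
qed

lemma smoothing_s_arcs_not_on_face:
  "(a0, a3) \<notin> eqcl (graph_on X (s \<circ> \<alpha>))" "(a1, a2) \<notin> eqcl (graph_on X (s \<circ> \<alpha>))"
  using S.smoothing_arc_not_on_face[OF in_X(1)] S.smoothing_arc_not_on_face[OF in_X(2)] s_at
  unfolding S.\<phi>_def by simp_all

lemma smoothing_s_arcs_in_component:
  "(a0, a3) \<in> eqcl (map_rel s)" "(a1, a2) \<in> eqcl (map_rel s)"
  using rotation_eqcl[OF in_X(1), of s] rotation_eqcl[OF in_X(2), of s] s_at by simp_all

lemma face_s_in_component: "(x, y) \<in> eqcl (graph_on X (s \<circ> \<alpha>)) \<Longrightarrow> (x, y) \<in> eqcl (map_rel s)"
  using eqcl_faces_subset by blast

lemma faces_s_apart: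
  assumes apart: "(a0, a1) \<notin> eqcl (map_rel s)"
  shows "(\<alpha> a0, \<alpha> a2) \<notin> eqcl (graph_on X (s \<circ> \<alpha>))"
proof
  assume "(\<alpha> a0, \<alpha> a2) \<in> eqcl (graph_on X (s \<circ> \<alpha>))"
  then have "(a3, a1) \<in> eqcl (graph_on X (s \<circ> \<alpha>))"
    using eqcl_trans[OF eqcl_sym[OF faces_s_at(1)] eqcl_trans[OF _ faces_s_at(4)]] by blast
  then have "(a0, a1) \<in> eqcl (map_rel s)"
    using eqcl_trans[OF smoothing_s_arcs_in_component(1) face_s_in_component] by blast
  with apart show False by contradiction
qed

lemma faces_K_apart:
  assumes apart: "(a0, a1) \<notin> eqcl (map_rel s)"
  shows "(\<alpha> a1, \<alpha> a3) \<notin> eqcl (graph_on X (K \<circ> \<alpha>))"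
proof
  let ?Cs = "eqcl (graph_on X (s \<circ> \<alpha>))"
  note f = faces_s_at and arc = smoothing_s_arcs_in_component
  assume "(\<alpha> a1, \<alpha> a3) \<in> eqcl (graph_on X (K \<circ> \<alpha>))"
  then have "(\<alpha> a1, \<alpha> a3) \<in> eqcl (insert (\<alpha> a0, \<alpha> a2) (graph_on X (s \<circ> \<alpha>)))"
    using eqcl_graph_transpose_subset[where g = "K \<circ> \<alpha>", OF \<alpha>_in \<alpha>_in face_K] in_X by blast
  then consider "(\<alpha> a1, \<alpha> a3) \<in> ?Cs" | "(\<alpha> a1, \<alpha> a0) \<in> ?Cs" | "(\<alpha> a1, \<alpha> a2) \<in> ?Cs"
    unfolding eqcl_insert_iff by blast
  then show False
  proof cases
    case 1
    then have "(a2, a0) \<in> ?Cs" using eqcl_trans[OF eqcl_sym[OF f(3)] eqcl_trans[OF _ f(2)]] by blast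
    then have "(a0, a1) \<in> eqcl (map_rel s)"
      using eqcl_trans[OF eqcl_sym[OF face_s_in_component] eqcl_sym[OF arc(2)]] by blast
    with apart show False by contradiction
  next
    case 2
    then have "(a2, a3) \<in> ?Cs" using eqcl_trans[OF eqcl_sym[OF f(3)] eqcl_trans[OF _ f(1)]] by blast
    then have "(a0, a1) \<in> eqcl (map_rel s)"
      using eqcl_trans[OF eqcl_trans[OF arc(1) eqcl_sym[OF face_s_in_component]] eqcl_sym[OF arc(2)]]
      by blast
    with apart show False by contradiction
  next
    case 3
    then have "(a2, a1) \<in> ?Cs" using eqcl_trans[OF eqcl_sym[OF f(3)] eqcl_trans[OF _ f(4)]] by blast
    then show False using smoothing_s_arcs_not_on_face(2) eqcl_sym[of a2 a1] by blast
  qed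
qed

lemma ncomp_resolution_merge:
  assumes "(a0, a1) \<notin> eqcl (map_rel s)"
  shows "ncomp t + 1 = ncomp s"
  using face_s.ncycles_transpose_join(1)[where g = "K \<circ> \<alpha>", OF \<alpha>_in \<alpha>_in faces_s_apart[OF assms] face_K]
    face_K.ncycles_transpose_join(1)[where g = "t \<circ> \<alpha>", OF \<alpha>_in \<alpha>_in faces_K_apart[OF assms] face_t]
    nfaces_s nfaces_t in_X
  unfolding nfaces_def by simp

text \<open>This is the only place where planarity enters.\<close>

lemma face_s_joins_at_vertex:
  assumes near: "(a0, a1) \<in> eqcl (map_rel s)"
  shows "(\<alpha> a0, \<alpha> a2) \<in> eqcl (graph_on X (s \<circ> \<alpha>))"
proof (rule ccontr)
  assume "(\<alpha> a0, \<alpha> a2) \<notin> eqcl (graph_on X (s \<circ> \<alpha>))"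
  then have "nfaces K + 1 = nfaces s"
    using face_s.ncycles_transpose_join[where g = "K \<circ> \<alpha>", OF \<alpha>_in \<alpha>_in _ face_K] in_X
    unfolding nfaces_def by blast
  moreover have "ncomp s = ncomp K"
  proof (rule ncomp_split_vertex(2)[OF bij_K in_X(1,3)])
    show "a0 \<noteq> a2" using distinct by simp
    have "(a0, a1) \<in> eqcl (graph_on X K)" "(a1, a2) \<in> eqcl (graph_on X K)"
      using graph_on_eqcl[OF in_X(1), of K] graph_on_eqcl[OF in_X(2), of K] K_cycle by simp_all
    then show "(a0, a2) \<in> eqcl (graph_on X K)" by (rule eqcl_trans)
    show "(a0, a2) \<in> eqcl (map_rel s)" using eqcl_trans[OF near smoothing_s_arcs_in_component(2)] .
  qed (rule s)
  ultimately show False using planar nfaces_s by simp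
qed

lemma ncomp_resolution_split:
  assumes near: "(a0, a1) \<in> eqcl (map_rel s)"
  shows "ncomp t = ncomp s + 1"
proof -
  let ?Cs = "eqcl (graph_on X (s \<circ> \<alpha>))"
  note f = faces_s_at and not_face = smoothing_s_arcs_not_on_face
  have ab: "(\<alpha> a0, \<alpha> a2) \<in> ?Cs" by (rule face_s_joins_at_vertex[OF near])
  have "(a0, a2) \<in> eqcl (map_rel s)" using eqcl_trans[OF near smoothing_s_arcs_in_component(2)] .
  then have "(a0, a2) \<in> ?Cs \<or> (a3, a2) \<in> ?Cs"
    using S.eqcl_map_rel_face_cases[OF in_X(1)] s_at unfolding S.\<phi>_def by simp
  moreover have "(a3, a2) \<notin> ?Cs"
  proof
    assume "(a3, a2) \<in> ?Cs"
    moreover have "(a3, a1) \<in> ?Cs" using eqcl_trans[OF eqcl_sym[OF f(1)] eqcl_trans[OF ab f(4)]] .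
    ultimately have "(a1, a2) \<in> ?Cs" by (blast intro: eqcl_trans[OF eqcl_sym[of a3 a1]])
    then show False using not_face(2) by contradiction
  qed
  ultimately have "(a0, a2) \<in> ?Cs" by blast
  then have a0_c: "(a0, \<alpha> a1) \<in> ?Cs" using eqcl_trans[OF _ eqcl_sym[OF f(3)]] by blast
  have cd: "(\<alpha> a1, \<alpha> a3) \<in> ?Cs" using eqcl_trans[OF eqcl_sym[OF a0_c] eqcl_sym[OF f(2)]] .
  have ca: "(\<alpha> a1, \<alpha> a0) \<notin> ?Cs"
    using eqcl_trans[OF a0_c eqcl_trans[OF _ f(1)]] not_face(1) by blast
  have cb: "(\<alpha> a1, \<alpha> a2) \<notin> ?Cs"
    using eqcl_trans[OF _ eqcl_sym[OF ab]] ca by blast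
  have "(\<alpha> a1, \<alpha> a3) \<in> eqcl (graph_on X (K \<circ> \<alpha>))"
    by (rule eqcl_graph_transpose_away[OF \<alpha>_in \<alpha>_in face_K cd ca cb]) (use in_X in auto)
  then show ?thesis
    using face_s.ncycles_transpose_split[where g = "K \<circ> \<alpha>", OF \<alpha>_in \<alpha>_in \<alpha>_distinct(1) ab face_K]
      face_K.ncycles_transpose_split[where g = "t \<circ> \<alpha>", OF \<alpha>_in \<alpha>_in \<alpha>_distinct(2) _ face_t]
      nfaces_s nfaces_t in_X
    unfolding nfaces_def by simp
qed

theorem ncomp_resolution:
  "int (ncomp t) = int (ncomp s) + (if (a0, a1) \<in> eqcl (map_rel s) then 1 else -1)"
  using ncomp_resolution_merge ncomp_resolution_split by fastforce

end

section \<open>The maps of a link diagram\<close>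

text \<open>Crossings outside S stay four-valent vertices of the diagram's map.\<close>

definition partial_smoothing :: "nat list \<Rightarrow> nat set \<Rightarrow> nat \<times> nat \<Rightarrow> nat \<times> nat" where
  "partial_smoothing w S e = (if fst e \<in> S then (fst e, partner (w ! fst e) (snd e)) else rot e)"

text \<open>The u-smoothing at a crossing is its rotation composed with the transposition of the
  endpoints pivot u and pivot u + 2.\<close>

definition pivot :: "nat \<Rightarrow> nat" where
  "pivot b = (if b = 0 then 1 else 0)"

lemma less_4_cases: "k < (4::nat) \<Longrightarrow> k = 0 \<or> k = 1 \<or> k = 2 \<or> k = 3"
  by auto

lemma partner_less_4: "partner b k < 4"
  unfolding partner_def by auto

lemma partner_partner: "k < 4 \<Longrightarrow> partner b (partner b k) = k"
  using less_4_cases[of k] unfolding partner_def by auto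

lemma partner_neq: "k < 4 \<Longrightarrow> partner b k \<noteq> k"
  using less_4_cases[of k] unfolding partner_def by auto

lemma endpoints_iff: "e \<in> endpoints D \<longleftrightarrow> fst e < ncr D \<and> snd e < 4"
  unfolding endpoints_def by (cases e) auto

lemma finite_endpoints: "finite (endpoints D)"
  unfolding endpoints_def by simp

lemma rot_in: "e \<in> endpoints D \<Longrightarrow> rot e \<in> endpoints D"
  unfolding endpoints_iff rot_def by auto

lemma partial_smoothing_in: "e \<in> endpoints D \<Longrightarrow> partial_smoothing w S e \<in> endpoints D"
  unfolding endpoints_iff partial_smoothing_def rot_def using partner_less_4 by auto

lemma partial_smoothing_inj:
  assumes "x \<in> endpoints D" "y \<in> endpoints D" and "partial_smoothing w S x = partial_smoothing w S y"
  shows "x = y"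
proof -
  obtain i k j l where xy: "x = (i, k)" "y = (j, l)" by (cases x, cases y)
  then have "i = j" "k < 4" "l < 4"
    using assms unfolding partial_smoothing_def rot_def endpoints_iff by (auto split: if_splits)
  moreover have "partner (w ! i) k = partner (w ! i) l \<or> (k + 1) mod 4 = (l + 1) mod 4"
    using assms(3) xy \<open>i = j\<close> unfolding partial_smoothing_def rot_def by (auto split: if_splits)
  ultimately have "k = l"
    using partner_partner[of k "w ! i"] partner_partner[of l "w ! i"] less_4_cases[of k] less_4_cases[of l]
    by auto
  then show ?thesis using xy \<open>i = j\<close> by simp
qed

lemma bij_partial_smoothing: "bij_betw (partial_smoothing w S) (endpoints D) (endpoints D)"
proof -
  have inj: "inj_on (partial_smoothing w S) (endpoints D)"
    by (rule inj_onI) (rule partial_smoothing_inj)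
  moreover have "partial_smoothing w S ` endpoints D \<subseteq> endpoints D" using partial_smoothing_in by blast
  ultimately show ?thesis
    using endo_inj_surj[OF finite_endpoints _ inj] by (simp add: bij_betw_def)
qed

lemma partial_smoothing_empty: "partial_smoothing w {} = rot"
  by (rule ext) (simp add: partial_smoothing_def)

lemma partial_smoothing_insert:
  assumes "j \<notin> S" and x: "x \<in> endpoints D" and "w ! j \<in> {0, 1}"
  shows "partial_smoothing w (insert j S) x
    = partial_smoothing w S (transpose (j, pivot (w ! j)) (j, pivot (w ! j) + 2) x)"
proof -
  obtain i k where "x = (i, k)" "k < 4" using x unfolding endpoints_iff by (cases x) auto
  then show ?thesis
    using assms less_4_cases[of k]
    unfolding partial_smoothing_def transpose_def pivot_def rot_def partner_def by auto
qed

lemma partial_smoothing_pivots_on_cycle: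
  assumes "j \<notin> S" and "j < ncr D" and "p < 2"
  shows "((j, p), (j, p + 2)) \<in> eqcl (graph_on (endpoints D) (partial_smoothing w S))"
proof -
  have step: "((j, k), (j, k + 1)) \<in> eqcl (graph_on (endpoints D) (partial_smoothing w S))" if "k < 3" for k
    using graph_on_eqcl[of "(j, k)" "endpoints D" "partial_smoothing w S"] assms(1,2) that
    unfolding endpoints_iff partial_smoothing_def rot_def by simp
  show ?thesis
    using eqcl_trans[OF step[of p] step[of "p + 1"]] assms(3) by (simp add: numeral_2_eq_2)
qed

lemma rot_same_crossing:
  assumes "i < ncr D" and "k < 4" and "l < 4"
  shows "((i, k), (i, l)) \<in> eqcl (graph_on (endpoints D) rot)"
proof -
  have from_0: "((i, 0), (i, m)) \<in> eqcl (graph_on (endpoints D) rot)" if "m < 4" for m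
    using that
  proof (induction m)
    case (Suc m)
    then have "((i, m), (i, Suc m)) \<in> eqcl (graph_on (endpoints D) rot)"
      using graph_on_eqcl[of "(i, m)" "endpoints D" rot] assms(1) unfolding endpoints_iff rot_def by simp
    with Suc show ?case using eqcl_trans by fastforce
  qed simp
  show ?thesis using eqcl_trans[OF eqcl_sym[OF from_0[OF assms(2)]] from_0[OF assms(3)]] .
qed

lemma eqcl_rot_iff:
  assumes "x \<in> endpoints D" and "y \<in> endpoints D"
  shows "(x, y) \<in> eqcl (graph_on (endpoints D) rot) \<longleftrightarrow> fst x = fst y"
proof
  assume "(x, y) \<in> eqcl (graph_on (endpoints D) rot)"
  then show "fst x = fst y"
    by (induction rule: eqcl_induct) (auto simp: graph_on_def rot_def)
next
  assume "fst x = fst y"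
  then show "(x, y) \<in> eqcl (graph_on (endpoints D) rot)"
    using rot_same_crossing assms unfolding endpoints_iff by (cases x, cases y) auto
qed

lemma state_length: "state D w \<Longrightarrow> length w = ncr D"
  unfolding state_def by simp

lemma state_nth:
  assumes "state D w" and "j < ncr D"
  shows "w ! j \<in> {0, 1}"
proof -
  have "w ! j \<in> set w" using assms by (simp add: state_def)
  then show ?thesis using assms(1) unfolding state_def by blast
qed

locale link_diagram =
  fixes D :: diagram
  assumes diagram: "diagram D"
begin

lemma arc_in: "e \<in> endpoints D \<Longrightarrow> arc D e \<in> endpoints D"
  and arc_arc: "e \<in> endpoints D \<Longrightarrow> arc D (arc D e) = e"
  and arc_neq: "e \<in> endpoints D \<Longrightarrow> arc D e \<noteq> e"
  using diagram unfolding diagram_def by blast+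

sublocale fpf_involution "endpoints D" "arc D"
  by unfold_locales (auto simp: finite_endpoints arc_in arc_arc arc_neq)

lemma fst_endpoints: "fst ` endpoints D = {0..<ncr D}"
  by (force simp: endpoints_def)

lemma ncycles_rot: "ncycles (endpoints D) rot = ncr D"
proof -
  have Id: "eqcl {} = (Id :: (nat \<times> nat) set)" by (simp add: eqcl_def)
  have "card (endpoints D // eqcl (graph_on (endpoints D) rot)) = card ({0..<ncr D} // eqcl {})"
  proof (rule card_quotient_eqcl_eq[OF fst_endpoints])
    show "graph_on (endpoints D) rot \<subseteq> endpoints D \<times> endpoints D"
      by (rule graph_on_subset) (rule rot_in)
  qed (simp_all add: eqcl_rot_iff Id)
  also have "\<dots> = card ({0..<ncr D} // Id)" by (simp only: Id)
  also have "{0..<ncr D} // Id = (\<lambda>i. {i}) ` {0..<ncr D}"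
    unfolding quotient_eq_image by simp
  finally show ?thesis unfolding ncycles_def by (simp add: card_image)
qed

lemma crossing_adj_subset: "crossing_adj D \<subseteq> {0..<ncr D} \<times> {0..<ncr D}"
  using arc_in unfolding crossing_adj_def endpoints_iff by fastforce

lemma map_rel_rot_fst:
  assumes "(p, q) \<in> map_rel rot"
  shows "fst q = fst p \<or> (fst p, fst q) \<in> crossing_adj D"
proof -
  have "p \<in> endpoints D" "q = rot p \<or> q = arc D p"
    using assms unfolding map_rel_def graph_on_def by auto
  then show ?thesis unfolding crossing_adj_def endpoints_iff rot_def by (cases p) auto
qed

lemma eqcl_map_rel_rot_imp_adj:
  "(x, y) \<in> eqcl (map_rel rot) \<Longrightarrow> (fst x, fst y) \<in> eqcl (crossing_adj D)"
proof (induction rule: eqcl_induct)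
  case (step y z)
  have "(fst y, fst z) \<in> eqcl (crossing_adj D)"
    using step.hyps(2)
  proof
    assume "(y, z) \<in> map_rel rot"
    then show ?thesis using map_rel_rot_fst eqcl_base by (metis eqcl_refl)
  next
    assume "(z, y) \<in> map_rel rot"
    then show ?thesis using map_rel_rot_fst eqcl_base_converse by (metis eqcl_refl)
  qed
  with step.IH show ?case by (rule eqcl_trans)
qed simp

lemma crossing_adj_witness:
  assumes "(u, v) \<in> crossing_adj D \<or> (v, u) \<in> crossing_adj D"
  obtains p where "p \<in> endpoints D" "fst p = u" "fst (arc D p) = v"
  using assms
proof
  assume "(u, v) \<in> crossing_adj D"
  then obtain k where "k < 4" "u < ncr D" "fst (arc D (u, k)) = v" unfolding crossing_adj_def by auto
  then show thesis using that[of "(u, k)"] unfolding endpoints_iff by simp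
next
  assume "(v, u) \<in> crossing_adj D"
  then obtain k where "k < 4" "v < ncr D" "fst (arc D (v, k)) = u" unfolding crossing_adj_def by auto
  moreover have "(v, k) \<in> endpoints D" using calculation unfolding endpoints_iff by simp
  ultimately show thesis using that[of "arc D (v, k)"] arc_in arc_arc by simp
qed

lemma eqcl_map_rel_rot_same_crossing:
  assumes "p \<in> endpoints D" "q \<in> endpoints D" "fst p = fst q"
  shows "(p, q) \<in> eqcl (map_rel rot)"
  using eqcl_rot_iff[OF assms(1,2)] assms(3) eqcl_mono[of "graph_on (endpoints D) rot" "map_rel rot"]
  unfolding map_rel_def by blast

lemma eqcl_adj_imp_map_rel_rot:
  assumes x: "x \<in> endpoints D"
  shows "(fst x, j) \<in> eqcl (crossing_adj D) \<Longrightarrow> y \<in> endpoints D \<Longrightarrow> fst y = j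
    \<Longrightarrow> (x, y) \<in> eqcl (map_rel rot)"
proof (induction arbitrary: y rule: eqcl_induct)
  case base
  then show ?case using eqcl_map_rel_rot_same_crossing x by simp
next
  case (step u v)
  obtain p where p: "p \<in> endpoints D" "fst p = u" "fst (arc D p) = v"
    using crossing_adj_witness[OF step.hyps(2)] .
  have "(x, p) \<in> eqcl (map_rel rot)" using step.IH p by simp
  moreover have "(p, arc D p) \<in> eqcl (map_rel rot)" by (rule \<alpha>_eqcl[OF p(1)])
  moreover have "(arc D p, y) \<in> eqcl (map_rel rot)"
    using eqcl_map_rel_rot_same_crossing arc_in[OF p(1)] step.prems p(3) by simp
  ultimately show ?case by (meson eqcl_trans)
qed

lemma ncomp_rot: "ncomp rot = num_components D"
proof -
  have "card (endpoints D // eqcl (map_rel rot)) = card ({0..<ncr D} // eqcl (crossing_adj D))"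
  proof (rule card_quotient_eqcl_eq[OF fst_endpoints _ crossing_adj_subset])
    show "map_rel rot \<subseteq> endpoints D \<times> endpoints D"
      unfolding map_rel_def using graph_on_subset[of "endpoints D" rot] graph_on_subset[of "endpoints D" "arc D"]
        rot_in arc_in by blast
    fix x y assume "x \<in> endpoints D" "y \<in> endpoints D"
    then show "(x, y) \<in> eqcl (map_rel rot) \<longleftrightarrow> (fst x, fst y) \<in> eqcl (crossing_adj D)"
      using eqcl_map_rel_rot_imp_adj eqcl_adj_imp_map_rel_rot by blast
  qed
  then show ?thesis unfolding ncomp_def num_components_def eqcl_def .
qed

lemma nfaces_rot: "nfaces rot = num_faces D"
proof -
  interpret face: finite_perm "endpoints D" "rot \<circ> arc D"
    by (rule finite_perm_face) (use bij_partial_smoothing[of _ "{}"] in \<open>simp add: partial_smoothing_empty\<close>)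
  have fp: "face_perm D = rot \<circ> arc D" by (rule ext) (simp add: face_perm_def)
  have "{(e, f). \<exists>m. (face_perm D ^^ m) e = f} `` {x} = eqcl (graph_on (endpoints D) (rot \<circ> arc D)) `` {x}"
    if "x \<in> endpoints D" for x
  proof (rule set_eqI)
    fix y
    have "y \<in> {(e, f). \<exists>m. (face_perm D ^^ m) e = f} `` {x} \<longleftrightarrow> (\<exists>m. ((rot \<circ> arc D) ^^ m) x = y)"
      unfolding fp by simp
    also have "\<dots> \<longleftrightarrow> y \<in> eqcl (graph_on (endpoints D) (rot \<circ> arc D)) `` {x}"
      using face.eqcl_graph_funpow[OF that] face.eqcl_graph_imp_funpow[OF that] by (metis Image_singleton_iff)
    finally show "y \<in> {(e, f). \<exists>m. (face_perm D ^^ m) e = f} `` {x}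
      \<longleftrightarrow> y \<in> eqcl (graph_on (endpoints D) (rot \<circ> arc D)) `` {x}" .
  qed
  then show ?thesis
    unfolding nfaces_def ncycles_def num_faces_def quotient_eq_image by (simp cong: image_cong)
qed

text \<open>Euler's formula, imposed on diagrams in the definition, says that the map of D is planar.\<close>

lemma excess_rot: "excess rot = - 2 * int (ncr D)"
  using ncycles_rot ncomp_rot nfaces_rot diagram unfolding excess_def diagram_def by simp

text \<open>Smoothing the crossings one at a time: each step splits a vertex of the map.\<close>

lemma partial_smoothing_chain:
  assumes st: "state D w" and "S \<subseteq> {0..<ncr D}"
  shows "ncycles (endpoints D) (partial_smoothing w S) = ncr D + card S
    \<and> excess (partial_smoothing w S) \<le> - 2 * int (ncr D)"
proof -
  have "finite S" using assms(2) finite_subset by blast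
  then show ?thesis using assms(2)
proof (induction S rule: finite_induct)
  case empty
  then show ?case using ncycles_rot excess_rot by (simp add: partial_smoothing_empty)
next
  case (insert j S)
  then have j: "j < ncr D" and "S \<subseteq> {0..<ncr D}" by auto
  let ?a = "(j, pivot (w ! j))" and ?b = "(j, pivot (w ! j) + 2)"
  have ab: "?a \<in> endpoints D" "?b \<in> endpoints D" "?a \<noteq> ?b"
    using j unfolding endpoints_iff pivot_def by auto
  have "pivot (w ! j) < 2" by (simp add: pivot_def)
  from partial_smoothing_pivots_on_cycle[OF insert.hyps(2) j this]
  have "(?a, ?b) \<in> eqcl (graph_on (endpoints D) (partial_smoothing w S))" .
  note split = ncycles_split_vertex[OF bij_partial_smoothing ab this partial_smoothing_insert[where D = D]]
    excess_split_vertex_le[OF bij_partial_smoothing ab this partial_smoothing_insert[where D = D]]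
  have "ncycles (endpoints D) (partial_smoothing w (insert j S)) = ncycles (endpoints D) (partial_smoothing w S) + 1"
    "excess (partial_smoothing w (insert j S)) \<le> excess (partial_smoothing w S)"
    using split[OF insert.hyps(2) _ state_nth[OF st j]] by blast+
  then show ?case
    using insert.IH[OF \<open>S \<subseteq> {0..<ncr D}\<close>] insert.hyps by simp
qed
qed

abbreviation state_smoothing :: "nat list \<Rightarrow> nat \<times> nat \<Rightarrow> nat \<times> nat" where
  "state_smoothing w \<equiv> partial_smoothing w {0..<ncr D}"

lemma smoothing_state_smoothing: "smoothing (endpoints D) (arc D) (state_smoothing w)"
proof unfold_locales
  fix x assume x: "x \<in> endpoints D"
  then obtain i k where x_eq: "x = (i, k)" and "i < ncr D" "k < 4" unfolding endpoints_iff by (cases x) auto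
  show "state_smoothing w x \<in> endpoints D" by (rule partial_smoothing_in[OF x])
  show "state_smoothing w (state_smoothing w x) = x"
    using \<open>i < ncr D\<close> partner_partner[OF \<open>k < 4\<close>] unfolding x_eq partial_smoothing_def by simp
  show "state_smoothing w x \<noteq> x"
    using \<open>i < ncr D\<close> partner_neq[OF \<open>k < 4\<close>] unfolding x_eq partial_smoothing_def by simp
qed

lemma smooth_rel_eq: "smooth_rel D w = map_prod Inl Inl ` map_rel (state_smoothing w)"
proof
  show "smooth_rel D w \<subseteq> map_prod Inl Inl ` map_rel (state_smoothing w)"
  proof
    fix p :: "point \<times> point" assume "p \<in> smooth_rel D w"
    then consider e where "e \<in> endpoints D" "p = (Inl e, Inl (arc D e))"
      | i k where "i < ncr D" "k < 4" "p = (Inl (i, k), Inl (i, partner (w ! i) k))"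
      unfolding smooth_rel_def by blast
    then show "p \<in> map_prod Inl Inl ` map_rel (state_smoothing w)"
    proof cases
      case (1 e)
      then have "(e, arc D e) \<in> map_rel (state_smoothing w)" unfolding map_rel_def graph_on_def by blast
      then show ?thesis using 1 by force
    next
      case (2 i k)
      then have "((i, k), state_smoothing w (i, k)) \<in> map_rel (state_smoothing w)"
        unfolding map_rel_def graph_on_def endpoints_iff by auto
      then show ?thesis using 2 unfolding partial_smoothing_def by force
    qed
  qed
  show "map_prod Inl Inl ` map_rel (state_smoothing w) \<subseteq> smooth_rel D w"
  proof
    fix p :: "point \<times> point" assume "p \<in> map_prod Inl Inl ` map_rel (state_smoothing w)"
    then obtain e f where ef: "(e, f) \<in> map_rel (state_smoothing w)" "p = (Inl e, Inl f)" by auto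
    then have "e \<in> endpoints D" "f = state_smoothing w e \<or> f = arc D e"
      unfolding map_rel_def graph_on_def by auto
    moreover obtain i k where "e = (i, k)" by (cases e)
    ultimately show "p \<in> smooth_rel D w"
      using ef(2) unfolding smooth_rel_def endpoints_iff partial_smoothing_def by auto
  qed
qed

lemma inj_Inl_point: "inj (Inl :: nat \<times> nat \<Rightarrow> point)"
  by (rule injI) simp

lemma eqcl_smooth_rel_Inl:
  "eqcl (smooth_rel D w) `` {Inl e} = Inl ` (eqcl (map_rel (state_smoothing w)) `` {e})"
  unfolding smooth_rel_eq by (rule eqcl_map_prod_Image[OF inj_Inl_point])

lemma eqcl_smooth_rel_Inr: "eqcl (smooth_rel D w) `` {Inr j} = {Inr j}"
  unfolding smooth_rel_eq by (rule eqcl_map_prod_Image_outside[OF inj_Inl_point]) auto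

lemma card_circles: "card (circles D w) = ncomp (state_smoothing w) + nfree D"
proof -
  let ?R = "eqcl (map_rel (state_smoothing w))"
  let ?A = "(`) (Inl :: nat \<times> nat \<Rightarrow> point) ` (endpoints D // ?R)" and ?B = "(\<lambda>j. {Inr j :: point}) ` {0..<nfree D}"
  have "circles D w = ?A \<union> ?B"
    unfolding circles_def eqcl_def[symmetric] points_def quotient_eq_image image_Un image_image
      eqcl_smooth_rel_Inl eqcl_smooth_rel_Inr ..
  moreover have "card ?A = ncomp (state_smoothing w)"
    unfolding ncomp_def by (rule card_image) (simp add: inj_on_def inj_image_eq_iff[OF inj_Inl_point])
  moreover have "card ?B = nfree D"
    by (rule trans[OF card_image]) (simp_all add: inj_on_def)
  moreover have "card (?A \<union> ?B) = card ?A + card ?B"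
    using finite_endpoints by (intro card_Un_disjoint) (auto simp: quotient_eq_image)
  ultimately show ?thesis by simp
qed

lemma finite_circles: "finite (circles D w)"
  unfolding circles_def points_def quotient_eq_image using finite_endpoints by simp

lemma merging_iff: "merging D w i \<longleftrightarrow> ((i, 0), (i, 1)) \<notin> eqcl (map_rel (state_smoothing w))"
proof -
  let ?R = "eqcl (map_rel (state_smoothing w))"
  have "merging D w i \<longleftrightarrow> ?R `` {(i, 0)} \<noteq> ?R `` {(i, 1)}"
    unfolding merging_def circle_of_def eqcl_def[symmetric] eqcl_smooth_rel_Inl
    by (simp add: inj_image_eq_iff[OF inj_Inl_point])
  also have "\<dots> \<longleftrightarrow> ((i, 0), (i, 1)) \<notin> ?R"
  proof
    assume ne: "?R `` {(i, 0)} \<noteq> ?R `` {(i, 1)}"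
    show "((i, 0), (i, 1)) \<notin> ?R"
    proof
      assume "((i, 0), (i, 1)) \<in> ?R"
      then have "?R `` {(i, 0)} = ?R `` {(i, 1)}" by (rule eqcl_Image_eq)
      with ne show False by contradiction
    qed
  next
    assume "((i, 0), (i, 1)) \<notin> ?R"
    moreover have "(i, 1) \<in> ?R `` {(i, 1)}" by simp
    ultimately show "?R `` {(i, 0)} \<noteq> ?R `` {(i, 1)}" by auto
  qed
  finally show ?thesis .
qed

lemma planar_one_crossing_kept:
  assumes st: "state D w" and i: "i < ncr D"
  shows "2 * ncomp (partial_smoothing w ({0..<ncr D} - {i})) < nfaces (partial_smoothing w ({0..<ncr D} - {i}))"
  using partial_smoothing_chain[OF st, of "{0..<ncr D} - {i}"] i
  unfolding excess_def by auto

lemma vertex_resolution_at_crossing: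
  assumes st: "state D w" and i: "i < ncr D" and wi: "w ! i = 1"
  shows "vertex_resolution (endpoints D) (arc D) (partial_smoothing w ({0..<ncr D} - {i}))
    (state_smoothing w) (state_smoothing (w[i := 0])) (i, 0) (i, 1) (i, 2) (i, 3)"
proof -
  let ?S = "{0..<ncr D} - {i}"
  have S: "i \<notin> ?S" "insert i ?S = {0..<ncr D}" using i by auto
  have same_K: "partial_smoothing (w[i := 0]) ?S = partial_smoothing w ?S"
    by (rule ext) (simp add: partial_smoothing_def)
  show ?thesis
  proof (intro vertex_resolution.intro vertex_resolution_axioms.intro)
    show "fpf_involution (endpoints D) (arc D)" by unfold_locales (auto simp: finite_endpoints arc_in arc_arc arc_neq)
    show "bij_betw (partial_smoothing w ?S) (endpoints D) (endpoints D)" by (rule bij_partial_smoothing)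
    show "(i, 0) \<in> endpoints D" "(i, 1) \<in> endpoints D" "(i, 2) \<in> endpoints D" "(i, 3) \<in> endpoints D"
      using i by (simp_all add: endpoints_iff)
    show "distinct [(i, 0), (i, 1), (i, 2), (i, 3::nat)]" by simp
    show "partial_smoothing w ?S (i, 0) = (i, 1)" "partial_smoothing w ?S (i, 1) = (i, 2)"
      "partial_smoothing w ?S (i, 2) = (i, 3)" "partial_smoothing w ?S (i, 3) = (i, 0)"
      by (simp_all add: partial_smoothing_def rot_def)
    show "state_smoothing w x = partial_smoothing w ?S (transpose (i, 0) (i, 2) x)"
      if "x \<in> endpoints D" for x
      using partial_smoothing_insert[OF S(1) that, of w] wi S(2) by (simp add: pivot_def numeral_2_eq_2)
    show "state_smoothing (w[i := 0]) x = partial_smoothing w ?S (transpose (i, 1) (i, 3) x)"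
      if "x \<in> endpoints D" for x
      using partial_smoothing_insert[OF S(1) that, of "w[i := 0]"] S(2) same_K i state_length[OF st]
      by (simp add: pivot_def numeral_3_eq_3)
    show "smoothing (endpoints D) (arc D) (state_smoothing w)"
      "smoothing (endpoints D) (arc D) (state_smoothing (w[i := 0]))"
      by (rule smoothing_state_smoothing)+
    show "2 * ncomp (partial_smoothing w ?S) < nfaces (partial_smoothing w ?S)"
      by (rule planar_one_crossing_kept[OF st i])
  qed
qed

theorem card_circles_surgery:
  assumes "state D w" and "i < ncr D" and "w ! i = 1"
  shows "int (card (circles D (w[i := 0]))) = int (card (circles D w)) + (if merging D w i then -1 else 1)"
  using vertex_resolution.ncomp_resolution[OF vertex_resolution_at_crossing[OF assms]]
    card_circles[of w] card_circles[of "w[i := 0]"] merging_iff[of w i]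
  by simp

end

section \<open>Counting circles along the chain of states\<close>

lemma length_chain_state: "length (chain_state u k) = length u"
  unfolding chain_state_def by simp

lemma nth_chain_state: "j < length u \<Longrightarrow> chain_state u k ! j = (if j < k then u ! j else 1)"
  unfolding chain_state_def by simp

lemma chain_state_0: "chain_state u 0 = replicate (length u) 1"
  by (rule nth_equalityI) (simp_all add: length_chain_state nth_chain_state)

lemma chain_state_length: "chain_state u (length u) = u"
  by (rule nth_equalityI) (simp_all add: length_chain_state nth_chain_state)

lemma chain_state_Suc:
  assumes "k < length u"
  shows "chain_state u (Suc k) = (chain_state u k)[k := u ! k]"
  by (rule nth_equalityI) (use assms in \<open>auto simp: length_chain_state nth_chain_state nth_list_update\<close>)

lemma state_chain_state:
  assumes "state D u"
  shows "state D (chain_state u k)"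
  unfolding state_def
proof
  show "length (chain_state u k) = ncr D" using assms by (simp add: state_def length_chain_state)
  show "set (chain_state u k) \<subseteq> {0, 1}"
  proof
    fix y assume "y \<in> set (chain_state u k)"
    then obtain j where j: "j < length u" "y = chain_state u k ! j"
      by (auto simp: in_set_conv_nth length_chain_state)
    then have "y = u ! j \<or> y = 1" by (simp add: nth_chain_state)
    then show "y \<in> {0, 1}" using nth_mem[OF j(1)] assms unfolding state_def by auto
  qed
qed

lemma sum_list_update_0: "k < length xs \<Longrightarrow> sum_list (xs[k := 0]) + xs ! k = (sum_list xs :: nat)"
  by (induction xs arbitrary: k) (auto split: nat.splits)

context link_diagram
begin

lemma circles_chain_state_Suc:
  assumes st: "state D u" and k: "k < length u"
  shows "int (sum_list (chain_state u (Suc k))) + int (card (circles D (chain_state u (Suc k))))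
      + 2 * (if u ! k = 0 \<and> merging D (chain_state u k) k then 1 else 0)
    = int (sum_list (chain_state u k)) + int (card (circles D (chain_state u k)))"
proof -
  let ?c = "chain_state u k"
  have c_k: "?c ! k = 1" using k by (simp add: nth_chain_state)
  have "u ! k \<in> {0, 1}" using state_nth[OF st] k state_length[OF st] by simp
  then consider "u ! k = 0" | "u ! k = 1" by auto
  then show ?thesis
  proof cases
    case 1
    have "sum_list (?c[k := 0]) + 1 = sum_list ?c"
      using sum_list_update_0[of k ?c] c_k k by (simp add: length_chain_state)
    then show ?thesis
      using card_circles_surgery[OF state_chain_state[OF st] _ c_k] k state_length[OF st] 1
      unfolding chain_state_Suc[OF k] by simp
  next
    case 2
    then have "chain_state u (Suc k) = ?c" using c_k list_update_id chain_state_Suc[OF k] by metis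
    then show ?thesis using 2 by simp
  qed
qed

lemma card_circles_Phi:
  assumes st: "state D u"
  shows "int (sum_list u) + int (card (circles D u)) + 2 * int (Phi D u)
    = int (ncr D) + int (card (circles D (replicate (ncr D) 1)))"
proof -
  define M where "M k = {j. j < k \<and> u ! j = 0 \<and> merging D (chain_state u j) j}" for k
  have M_Suc: "card (M (Suc k)) = card (M k) + (if u ! k = 0 \<and> merging D (chain_state u k) k then 1 else 0)"
    for k
  proof -
    have "M (Suc k) = (if u ! k = 0 \<and> merging D (chain_state u k) k then insert k (M k) else M k)"
      unfolding M_def by (auto simp: less_Suc_eq)
    moreover have "k \<notin> M k" "finite (M k)" unfolding M_def by simp_all
    ultimately show ?thesis by simp
  qed
  have "int (sum_list (chain_state u k)) + int (card (circles D (chain_state u k))) + 2 * int (card (M k))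
      = int (ncr D) + int (card (circles D (replicate (ncr D) 1)))" if "k \<le> length u" for k
    using that
  proof (induction k)
    case 0
    then show ?case unfolding chain_state_0 state_length[OF st] M_def by (simp add: sum_list_replicate)
  next
    case (Suc k)
    then show ?case using circles_chain_state_Suc[OF st, of k] M_Suc[of k]
      by (cases "u ! k = 0 \<and> merging D (chain_state u k) k") simp_all
  qed
  from this[OF order_refl] show ?thesis
    unfolding chain_state_length M_def Phi_def by simp
qed

end

section \<open>The quantum grading near its maximum\<close>

context link_diagram
begin

lemma card_circles_le: "card (circles D w) \<le> card (endpoints D) + nfree D"
  using card_circles[of w] card_image_le[OF finite_endpoints, of "\<lambda>x. eqcl (map_rel (state_smoothing w)) `` {x}"]
  unfolding ncomp_def quotient_eq_image by simp

lemma Phi_le: "Phi D u \<le> length u"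
  unfolding Phi_def by (rule order_trans[OF card_mono[of "{..<length u}"]]) auto

lemma qdeg_eq:
  assumes st: "state D u" and en: "enhancement D u x"
  shows "qdeg D u x = int (n_plus D) - 2 * int (n_minus D) + int (ncr D)
    + int (card (circles D (replicate (ncr D) 1))) - 2 * int (Phi D u) - 2 * int (card {z \<in> circles D u. x z = -1})"
proof -
  let ?P = "{z \<in> circles D u. x z = 1}" and ?M = "{z \<in> circles D u. x z = -1}"
  have "circles D u = ?P \<union> ?M" using en unfolding enhancement_def by auto
  then have "card (circles D u) = card ?P + card ?M"
    using card_Un_disjoint[of ?P ?M] finite_circles[of u] by fastforce
  then show ?thesis using card_circles_Phi[OF st] unfolding qdeg_def by linarith
qed

lemma jmax_eq:
  "jmax D = int (n_plus D) - 2 * int (n_minus D) + int (ncr D) + int (card (circles D (replicate (ncr D) 1)))"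
  (is "_ = ?top")
proof -
  let ?Q = "{qdeg D u x | u x. state D u \<and> enhancement D u x}"
  let ?bottom = "?top - 2 * int (ncr D) - 2 * int (card (endpoints D)) - 2 * int (nfree D)"
  have bounds: "?bottom \<le> q \<and> q \<le> ?top" if q: "q \<in> ?Q" for q
  proof -
    obtain u x where ux: "q = qdeg D u x" "state D u" "enhancement D u x" using q by blast
    have "card {z \<in> circles D u. x z = -1} \<le> card (endpoints D) + nfree D"
      using card_mono[OF finite_circles, of "{z \<in> circles D u. x z = -1}" u] card_circles_le[of u] by auto
    then have "int (card {z \<in> circles D u. x z = -1}) \<le> int (card (endpoints D)) + int (nfree D)"
      by linarith
    moreover have "int (Phi D u) \<le> int (ncr D)" using Phi_le[of u] state_length[OF ux(2)] by simp
    ultimately show ?thesis using qdeg_eq[OF ux(2,3)] ux(1) by linarith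
  qed
  have "?Q \<subseteq> {?bottom..?top}"
  proof
    fix q assume "q \<in> ?Q"
    from bounds[OF this] show "q \<in> {?bottom..?top}" by simp
  qed
  then have "finite ?Q" by (rule finite_subset) simp
  moreover have "?top \<in> ?Q"
  proof -
    have st: "state D (replicate (ncr D) 1)" and en: "enhancement D (replicate (ncr D) 1) (\<lambda>_. 1)"
      unfolding state_def enhancement_def by auto
    moreover have "Phi D (replicate (ncr D) 1) = 0"
      using card_circles_Phi[OF st] by (simp add: sum_list_replicate)
    then have "qdeg D (replicate (ncr D) 1) (\<lambda>_. 1) = ?top" using qdeg_eq[OF st en] by simp
    ultimately show ?thesis by force
  qed
  ultimately show ?thesis unfolding jmax_def using bounds by (intro Max_eqI) auto
qed

end

theorem corollary4p5:
  assumes "diagram D" and "state D u" and "enhancement D u x"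
    and "qdeg D u x = jmax D - 2"
  shows "Phi D u \<le> 1
    \<and> (Phi D u = 0 \<longrightarrow> (\<exists>z \<in> circles D u. x z = -1 \<and> (\<forall>w \<in> circles D u. w \<noteq> z \<longrightarrow> x w = 1)))
    \<and> (Phi D u = 1 \<longrightarrow> (\<forall>z \<in> circles D u. x z = 1))"
proof -
  interpret link_diagram D by unfold_locales (rule assms(1))
  let ?M = "{z \<in> circles D u. x z = -1}"
  have key: "Phi D u + card ?M = 1"
    using qdeg_eq[OF assms(2,3)] jmax_eq assms(4) by linarith
  have label: "x z = 1 \<or> x z = -1" if "z \<in> circles D u" for z
    using assms(3) that unfolding enhancement_def by blast
  show ?thesis
  proof (intro conjI impI)
    show "Phi D u \<le> 1" using key by simp
  next
    assume "Phi D u = 0"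
    then obtain z where "?M = {z}" using key card_1_singletonE by auto
    then show "\<exists>z \<in> circles D u. x z = -1 \<and> (\<forall>w \<in> circles D u. w \<noteq> z \<longrightarrow> x w = 1)"
      using label by blast
  next
    assume "Phi D u = 1"
    then have "?M = {}" using key finite_circles[of u] by simp
    then show "\<forall>z \<in> circles D u. x z = 1" using label by blast
  qed
qed

end
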